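(* Let $X=\mathcal A^{{\mathbb Z^d}}$ be a full $d$-dimensional shift on a finite alphabet $\mathcal A$, $\phi:X\to\mathbb R$ be a continuous function, and $\beta_{\mathrm{c}}\in\mathbb R$. Then, $\phi$ has a freezing phase transition at $\beta_{\mathrm{c}}$ if and only if the pressure function is affine on $[\,\beta_{\mathrm{c}},\infty)$ and not on any larger interval. Moreover, in this case $p_\phi(\beta)=s_\phi \beta+h_\phi$.
   Context: Pressure function $p_\phi(\beta)=\sup_\nu\{h(\nu)+\beta\int\phi\,d\nu\}$ over shift-invariant probability measures $\nu$ ($h$ = measure-theoretic entropy). $s_\phi=\sup_\nu\int\phi\,d\nu$ and $h_\phi=\sup\{h(\eta):\int\phi\,d\eta=s_\phi\}$ (sups over shift-invariant measures). $\mathrm{ES}(\beta\phi)$ is the set of shift-invariant $\mu$ with $h(\mu)+\beta\int\phi\,d\mu=p_\phi(\beta)$. $\phi$ has a freezing phase transition at $\beta_c$ if $\mathrm{ES}(\beta\phi)=\mathrm{ES}(\beta'\phi)$ for all $\beta,\beta'>\beta_c$ while $\mathrm{ES}(\beta\phi)\ne\mathrm{ES}(\beta'\phi)$ for any $\beta<\beta_c<\beta'$. *)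

theory Defs
  imports "HOL-Probability.Probability"
begin

text \<open>Full shift X = A^(Z^d): sites are 'd \<Rightarrow> int with 'd a finite index type
  (d = CARD('d)), configurations are functions from sites to the finite alphabet 'a.\<close>

type_synonym ('d, 'a) config = "('d \<Rightarrow> int) \<Rightarrow> 'a"

definition shift_topology :: "('d, 'a) config topology" where
  "shift_topology = product_topology (\<lambda>_. discrete_topology UNIV) UNIV"

text \<open>Borel (= product) sigma-algebra on X.\<close>
definition shift_space :: "('d, 'a) config measure" where
  "shift_space = PiM UNIV (\<lambda>_. count_space UNIV)"

definition shift_map :: "('d \<Rightarrow> int) \<Rightarrow> ('d, 'a) config \<Rightarrow> ('d, 'a) config" where
  "shift_map v x = (\<lambda>n. x (\<lambda>k. n k + v k))"

definition invariant_measures :: "('d, 'a) config measure set" where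
  "invariant_measures = {\<nu>. sets \<nu> = sets shift_space \<and> prob_space \<nu> \<and>
      (\<forall>v. distr \<nu> shift_space (shift_map v) = \<nu>)}"

definition box :: "nat \<Rightarrow> ('d \<Rightarrow> int) set" where
  "box n = {i. \<forall>k. 0 \<le> i k \<and> i k < int n}"

definition cylinder :: "('d \<Rightarrow> int) set \<Rightarrow> (('d \<Rightarrow> int) \<Rightarrow> 'a) \<Rightarrow> ('d, 'a) config set" where
  "cylinder \<Lambda> w = {x. \<forall>i\<in>\<Lambda>. x i = w i}"

definition eta :: "real \<Rightarrow> real" where
  "eta t = (if t = 0 then 0 else - t * ln t)"

definition block_entropy :: "('d::finite, 'a::finite) config measure \<Rightarrow> nat \<Rightarrow> real" where
  "block_entropy \<nu> n = (\<Sum>w \<in> PiE (box n) (\<lambda>_. UNIV). eta (measure \<nu> (cylinder (box n) w)))"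

text \<open>Measure-theoretic (Kolmogorov-Sinai) entropy of a shift-invariant measure on the
  full Z^d shift (the cylinder partition is generating).\<close>
definition ms_entropy :: "('d::finite, 'a::finite) config measure \<Rightarrow> real" where
  "ms_entropy \<nu> = lim (\<lambda>n. block_entropy \<nu> n / real (n ^ CARD('d)))"

definition pressure :: "(('d::finite, 'a::finite) config \<Rightarrow> real) \<Rightarrow> real \<Rightarrow> real" where
  "pressure \<phi> \<beta> = (SUP \<nu>\<in>invariant_measures. ms_entropy \<nu> + \<beta> * integral\<^sup>L \<nu> \<phi>)"

definition s_phi :: "(('d::finite, 'a::finite) config \<Rightarrow> real) \<Rightarrow> real" where
  "s_phi \<phi> = (SUP \<nu>\<in>invariant_measures. integral\<^sup>L \<nu> \<phi>)"

definition h_phi :: "(('d::finite, 'a::finite) config \<Rightarrow> real) \<Rightarrow> real" where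
  "h_phi \<phi> = (SUP \<eta>\<in>{\<eta>\<in>invariant_measures. integral\<^sup>L \<eta> \<phi> = s_phi \<phi>}. ms_entropy \<eta>)"

definition equilibrium_states ::
  "(('d::finite, 'a::finite) config \<Rightarrow> real) \<Rightarrow> real \<Rightarrow> ('d, 'a) config measure set" where
  "equilibrium_states \<phi> \<beta> = {\<mu>\<in>invariant_measures.
      ms_entropy \<mu> + \<beta> * integral\<^sup>L \<mu> \<phi> = pressure \<phi> \<beta>}"

definition freezing_phase_transition ::
  "(('d::finite, 'a::finite) config \<Rightarrow> real) \<Rightarrow> real \<Rightarrow> bool" where
  "freezing_phase_transition \<phi> \<beta>c \<longleftrightarrow>
     (\<forall>\<beta> \<beta>'. \<beta> > \<beta>c \<and> \<beta>' > \<beta>c \<longrightarrow> equilibrium_states \<phi> \<beta> = equilibrium_states \<phi> \<beta>') \<and>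
     (\<forall>\<beta> \<beta>'. \<beta> < \<beta>c \<and> \<beta>c < \<beta>' \<longrightarrow> equilibrium_states \<phi> \<beta> \<noteq> equilibrium_states \<phi> \<beta>')"

definition affine_on :: "(real \<Rightarrow> real) \<Rightarrow> real set \<Rightarrow> bool" where
  "affine_on f I \<longleftrightarrow> (\<exists>a b. \<forall>x\<in>I. f x = a * x + b)"

end

theory Submission
  imports Defs "HOL-Library.Diagonal_Subsequence" "HOL-Real_Asymp.Real_Asymp"
begin

(*
  The pressure is the supremum of the affine functions beta |-> h(nu) + beta * int phi dnu over the
  invariant measures nu; hence it is convex, thus continuous, and every supremum is attained.  The
  latter holds because the invariant measures are sequentially compact for cylinder-wise convergence
  (diagonal extraction and Kolmogorov extension), integration against a continuous phi is continuous
  for it, and the entropy, an infimum of continuous block entropies by Fekete's argument, is upper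
  semicontinuous.

  An equilibrium state at beta is a supporting line of the pressure at beta.  So where the pressure
  is affine around beta, the equilibrium states are exactly the measures whose integral is the slope
  and whose entropy is the intercept.  A freezing transition gives a common equilibrium state for
  all beta > beta_c, so the pressure is affine there, and at beta_c by continuity; a common
  equilibrium state at some beta < beta_c < beta' would, by convexity, make it affine on [beta, oo).
  Conversely, affinity on [beta_c, oo) and nowhere further yields exactly the freezing behaviour.
  Finally h >= 0 forces the slope to be s_phi and the intercept to be h_phi.
*)

section \<open>Cylinders\<close>

definition words :: "('d \<Rightarrow> int) set \<Rightarrow> (('d \<Rightarrow> int) \<Rightarrow> 'a) set" where
  "words J = PiE J (\<lambda>_. UNIV)"

definition shift_prob :: "('d, 'a) config measure \<Rightarrow> bool" where
  "shift_prob \<mu> \<longleftrightarrow> prob_space \<mu> \<and> sets \<mu> = sets shift_space"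

lemma space_shift_space [simp]: "space shift_space = UNIV"
  by (simp add: shift_space_def space_PiM)

lemma sets_cylinder [measurable]:
  assumes "finite J"
  shows "cylinder J w \<in> sets shift_space"
proof -
  have "cylinder J w = (\<Inter>i\<in>J. {x\<in>space shift_space. x i = w i}) \<inter> space shift_space"
    by (auto simp: cylinder_def)
  also have "\<dots> \<in> sets shift_space"
    using assms unfolding shift_space_def by measurable
  finally show ?thesis .
qed

lemma finite_words [simp]: "finite J \<Longrightarrow> finite (words J :: (('d \<Rightarrow> int) \<Rightarrow> 'a::finite) set)"
  unfolding words_def by (intro finite_PiE) auto

lemma card_words:
  "finite J \<Longrightarrow> card (words J :: (('d \<Rightarrow> int) \<Rightarrow> 'a::finite) set) = CARD('a) ^ card J"
  by (simp add: words_def card_PiE)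

lemma words_empty: "words {} = {\<lambda>_. undefined}"
  by (simp add: words_def)

lemma restrict_in_words [simp]: "restrict x J \<in> words J"
  by (simp add: words_def)

lemma range_restrict_eq_words: "range (\<lambda>x::('d, 'a) config. restrict x J) = words J"
proof (intro equalityI subsetI)
  fix w assume "w \<in> words J"
  then have "w = restrict w J" by (simp add: words_def)
  then show "w \<in> range (\<lambda>x. restrict x J)" by blast
qed auto

lemma mem_cylinder_restrict: "x \<in> cylinder J (restrict x J)"
  by (simp add: cylinder_def)

lemma cylinder_empty [simp]: "cylinder {} w = UNIV"
  by (simp add: cylinder_def)

lemma cylinder_cong: "(\<And>i. i \<in> J \<Longrightarrow> w i = w' i) \<Longrightarrow> cylinder J w = cylinder J w'"
  by (auto simp: cylinder_def)

lemma cylinder_restrict: "cylinder J (restrict w J) = cylinder J w"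
  by (rule cylinder_cong) simp

lemma cylinder_eq_restrict: "w \<in> words J \<Longrightarrow> cylinder J w = {x. restrict x J = w}"
  by (auto simp: cylinder_def words_def restrict_def fun_eq_iff PiE_def extensional_def)

lemma disjoint_family_cylinders: "disjoint_family_on (cylinder J) (words J)"
  by (auto simp: disjoint_family_on_def cylinder_eq_restrict)

lemma cylinder_eq_UN_refine:
  assumes "J \<subseteq> H" "w \<in> words J"
  shows "cylinder J w = (\<Union>v\<in>{v\<in>words H. restrict v J = w}. cylinder H v)"
proof safe
  fix x assume x: "x \<in> cylinder J w"
  have "restrict (restrict x H) J = restrict x J"
    using assms(1) by (auto simp: restrict_def fun_eq_iff)
  then have "restrict x H \<in> {v\<in>words H. restrict v J = w}"
    using x assms(2) by (simp add: cylinder_eq_restrict)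
  then show "x \<in> (\<Union>v\<in>{v\<in>words H. restrict v J = w}. cylinder H v)"
    using mem_cylinder_restrict by blast
next
  fix x v assume "v \<in> words H" "x \<in> cylinder H v" "w = restrict v J"
  then show "x \<in> cylinder J (restrict v J)"
    using assms by (auto simp: cylinder_def)
qed

lemma prod_emb_eq_UN_cylinders:
  fixes X :: "(('d \<Rightarrow> int) \<Rightarrow> 'a) set"
  shows "prod_emb UNIV (\<lambda>_. count_space UNIV) J X = (\<Union>w\<in>X \<inter> words J. cylinder J w)"
proof safe
  fix x assume "x \<in> prod_emb UNIV (\<lambda>_. count_space UNIV) J X"
  then have "restrict x J \<in> X" by (simp add: prod_emb_def)
  then show "x \<in> (\<Union>w\<in>X \<inter> words J. cylinder J w)"
    by (intro UN_I[of "restrict x J"]) (auto simp: mem_cylinder_restrict)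
next
  fix x w assume "w \<in> X" "w \<in> words J" "x \<in> cylinder J w"
  then show "x \<in> prod_emb UNIV (\<lambda>_. count_space UNIV) J X"
    by (simp add: prod_emb_def cylinder_eq_restrict)
qed

lemma shift_prob_space: "shift_prob \<mu> \<Longrightarrow> space \<mu> = UNIV"
  unfolding shift_prob_def by (metis sets_eq_imp_space_eq space_shift_space)

lemma shift_prob_sets_cylinder: "shift_prob \<mu> \<Longrightarrow> finite J \<Longrightarrow> cylinder J w \<in> sets \<mu>"
  unfolding shift_prob_def by simp

lemma shift_prob_borel_measurable:
  "shift_prob \<mu> \<Longrightarrow> borel_measurable \<mu> = borel_measurable shift_space"
  unfolding shift_prob_def by (intro measurable_cong_sets) auto

lemma shift_prob_abs_measure_le_1: "shift_prob \<mu> \<Longrightarrow> \<bar>measure \<mu> A\<bar> \<le> 1"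
  unfolding shift_prob_def using prob_space.prob_le_1 by (metis abs_of_nonneg measure_nonneg)

lemma invariant_measures_shift_prob: "\<mu> \<in> invariant_measures \<Longrightarrow> shift_prob \<mu>"
  by (simp add: invariant_measures_def shift_prob_def)

lemma measure_UN_cylinders:
  fixes \<mu> :: "('d, 'a::finite) config measure"
  assumes "shift_prob \<mu>" "finite J" "W \<subseteq> words J"
  shows "measure \<mu> (\<Union>w\<in>W. cylinder J w) = (\<Sum>w\<in>W. measure \<mu> (cylinder J w))"
proof -
  interpret prob_space \<mu> using assms(1) by (simp add: shift_prob_def)
  show ?thesis
    using assms finite_subset[OF assms(3)] shift_prob_sets_cylinder[OF assms(1,2)]
      disjoint_family_on_mono[OF assms(3) disjoint_family_cylinders]
    by (intro measure_finite_Union) auto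
qed

lemma measure_cylinder_eq_sum_refine:
  fixes \<mu> :: "('d, 'a::finite) config measure"
  assumes "shift_prob \<mu>" "J \<subseteq> H" "finite H" "w \<in> words J"
  shows "measure \<mu> (cylinder J w) = (\<Sum>v\<in>{v\<in>words H. restrict v J = w}. measure \<mu> (cylinder H v))"
  unfolding cylinder_eq_UN_refine[OF assms(2,4)] using assms by (intro measure_UN_cylinders) auto

lemma sum_measure_cylinders:
  fixes \<mu> :: "('d, 'a::finite) config measure"
  assumes "shift_prob \<mu>" "finite H"
  shows "(\<Sum>v\<in>words H. measure \<mu> (cylinder H v)) = 1"
proof -
  interpret prob_space \<mu> using assms(1) by (simp add: shift_prob_def)
  have "1 = measure \<mu> (cylinder {} (\<lambda>_. undefined))"
    using prob_space shift_prob_space[OF assms(1)] by simp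
  also have "\<dots> = (\<Sum>v\<in>{v\<in>words H. restrict v {} = (\<lambda>_. undefined)}. measure \<mu> (cylinder H v))"
    by (rule measure_cylinder_eq_sum_refine) (use assms in \<open>auto simp: words_empty\<close>)
  also have "{v\<in>words H. restrict v {} = (\<lambda>_. undefined)} = words H"
    by (auto simp: restrict_def)
  finally show ?thesis by simp
qed

lemma shift_prob_eqI:
  fixes \<nu>1 \<nu>2 :: "('d, 'a::finite) config measure"
  assumes "shift_prob \<nu>1" "shift_prob \<nu>2"
    and "\<And>J w. finite J \<Longrightarrow> measure \<nu>1 (cylinder J w) = measure \<nu>2 (cylinder J w)"
  shows "\<nu>1 = \<nu>2"
proof (rule measure_eqI_PiM_infinite)
  show "sets \<nu>1 = PiM UNIV (\<lambda>_. count_space UNIV)" "sets \<nu>2 = PiM UNIV (\<lambda>_. count_space UNIV)"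
    using assms(1,2) by (simp_all add: shift_prob_def shift_space_def)
  show "finite_measure \<nu>1" using assms(1) by (simp add: shift_prob_def prob_space_def)
  fix A and J :: "('d \<Rightarrow> int) set" assume J: "finite J"
  have "emeasure \<nu> (prod_emb UNIV (\<lambda>_. count_space UNIV) J (PiE J A)) =
      ennreal (\<Sum>w\<in>PiE J A \<inter> words J. measure \<nu> (cylinder J w))"
    if "shift_prob \<nu>" for \<nu> :: "('d, 'a) config measure"
  proof -
    interpret prob_space \<nu> using that by (simp add: shift_prob_def)
    show ?thesis
      unfolding prod_emb_eq_UN_cylinders emeasure_eq_measure
      using measure_UN_cylinders[OF that J] by simp
  qed
  then show "emeasure \<nu>1 (prod_emb UNIV (\<lambda>_. count_space UNIV) J (PiE J A)) =
        emeasure \<nu>2 (prod_emb UNIV (\<lambda>_. count_space UNIV) J (PiE J A))"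
    using assms J by simp
qed

section \<open>Translation invariance\<close>

definition translate_sites :: "('d \<Rightarrow> int) \<Rightarrow> ('d \<Rightarrow> int) set \<Rightarrow> ('d \<Rightarrow> int) set" where
  "translate_sites v J = (\<lambda>i k. i k + v k) ` J"

definition translate_word :: "('d \<Rightarrow> int) \<Rightarrow> (('d \<Rightarrow> int) \<Rightarrow> 'a) \<Rightarrow> (('d \<Rightarrow> int) \<Rightarrow> 'a)" where
  "translate_word v w = (\<lambda>j. w (\<lambda>k. j k - v k))"

lemma finite_translate_sites [simp]: "finite J \<Longrightarrow> finite (translate_sites v J)"
  by (simp add: translate_sites_def)

lemma measurable_shift_map [measurable]: "shift_map v \<in> measurable shift_space shift_space"
  unfolding shift_space_def shift_map_def
  by (rule measurable_PiM_single') (auto simp: space_PiM)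

lemma vimage_shift_map_cylinder:
  "shift_map v -` cylinder J w = cylinder (translate_sites v J) (translate_word v w)"
  by (auto simp: shift_map_def cylinder_def translate_sites_def translate_word_def)

lemma measure_translate_cylinder:
  assumes "\<mu> \<in> invariant_measures" "finite J"
  shows "measure \<mu> (cylinder (translate_sites v J) (translate_word v w)) = measure \<mu> (cylinder J w)"
proof -
  have sp: "shift_prob \<mu>" using assms(1) by (rule invariant_measures_shift_prob)
  have "measure \<mu> (cylinder J w) = measure (distr \<mu> shift_space (shift_map v)) (cylinder J w)"
    using assms by (simp add: invariant_measures_def)
  also have "\<dots> = measure \<mu> (shift_map v -` cylinder J w \<inter> space \<mu>)"
    using sp assms(2) by (intro measure_distr) (auto simp: shift_prob_def)
  finally show ?thesis
    by (simp add: shift_prob_space[OF sp] vimage_shift_map_cylinder)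
qed

lemma translate_word_bij_betw:
  "bij_betw (\<lambda>w. restrict (translate_word v w) (translate_sites v J)) (words J)
     (words (translate_sites v J))"
proof (rule bij_betw_byWitness[where f' = "\<lambda>u. restrict (\<lambda>i. u (\<lambda>k. i k + v k)) J"])
  show "\<forall>w\<in>words J.
      restrict (\<lambda>i. restrict (translate_word v w) (translate_sites v J) (\<lambda>k. i k + v k)) J = w"
    by (auto simp: words_def translate_word_def translate_sites_def fun_eq_iff PiE_def extensional_def)
  show "\<forall>u\<in>words (translate_sites v J).
      restrict (translate_word v (restrict (\<lambda>i. u (\<lambda>k. i k + v k)) J)) (translate_sites v J) = u"
    by (auto simp: words_def translate_word_def translate_sites_def fun_eq_iff PiE_def extensional_def)
qed (auto simp: words_def)

section \<open>Entropy of finite windows\<close>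

definition window_entropy :: "('d, 'a) config measure \<Rightarrow> ('d \<Rightarrow> int) set \<Rightarrow> real" where
  "window_entropy \<mu> J = (\<Sum>w\<in>words J. eta (measure \<mu> (cylinder J w)))"

lemma block_entropy_eq_window_entropy: "block_entropy \<mu> n = window_entropy \<mu> (box n)"
  by (simp add: block_entropy_def window_entropy_def words_def)

lemma window_entropy_translate:
  fixes \<mu> :: "('d, 'a::finite) config measure"
  assumes "\<mu> \<in> invariant_measures" "finite J"
  shows "window_entropy \<mu> (translate_sites v J) = window_entropy \<mu> J"
  unfolding window_entropy_def
  by (subst sum.reindex_bij_betw[OF translate_word_bij_betw, symmetric])
    (simp add: cylinder_restrict measure_translate_cylinder[OF assms])

lemma shift_prob_information_space: "shift_prob \<mu> \<Longrightarrow> information_space \<mu> (exp 1)"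
  unfolding information_space_def information_space_axioms_def shift_prob_def by simp

lemma
  fixes \<mu> :: "('d, 'a::finite) config measure"
  assumes "shift_prob \<mu>" "finite J"
  shows simple_function_restrict: "simple_function \<mu> (\<lambda>x. restrict x J)"
    and window_entropy_eq_entropy: "window_entropy \<mu> J =
      prob_space.entropy \<mu> (exp 1) (count_space (words J)) (\<lambda>x. restrict x J)"
proof -
  interpret information_space \<mu> "exp 1"
    using shift_prob_information_space[OF assms(1)] .
  have img: "(\<lambda>x. restrict x J) ` space \<mu> = words J"
    unfolding shift_prob_space[OF assms(1)] range_restrict_eq_words ..
  have vim: "(\<lambda>x. restrict x J) -` {w} \<inter> space \<mu> = cylinder J w" if "w \<in> words J" for w
    using that shift_prob_space[OF assms(1)] by (auto simp: cylinder_eq_restrict)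
  show sf: "simple_function \<mu> (\<lambda>x. restrict x J)"
    unfolding simple_function_def img using vim shift_prob_sets_cylinder[OF assms] assms(2) by auto
  have "entropy (exp 1) (count_space (words J)) (\<lambda>x. restrict x J) =
    - (\<Sum>w\<in>words J. measure \<mu> ((\<lambda>x. restrict x J) -` {w} \<inter> space \<mu>) *
         log (exp 1) (measure \<mu> ((\<lambda>x. restrict x J) -` {w} \<inter> space \<mu>)))"
    using entropy_simple_distributed[OF simple_distributedI[OF sf measure_nonneg refl]]
    unfolding img .
  also have "\<dots> = window_entropy \<mu> J"
    unfolding window_entropy_def sum_negf[symmetric]
    by (intro sum.cong refl) (auto simp: vim eta_def log_def)
  finally show "window_entropy \<mu> J = entropy (exp 1) (count_space (words J)) (\<lambda>x. restrict x J)" ..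
qed

lemma eta_nonneg: "0 \<le> t \<Longrightarrow> t \<le> 1 \<Longrightarrow> 0 \<le> eta t"
  unfolding eta_def using ln_le_zero_iff[of t] by (auto simp: mult_nonneg_nonpos)

lemma window_entropy_nonneg:
  assumes "shift_prob \<mu>"
  shows "0 \<le> window_entropy \<mu> J"
proof -
  interpret prob_space \<mu> using assms by (simp add: shift_prob_def)
  show ?thesis unfolding window_entropy_def by (intro sum_nonneg eta_nonneg) auto
qed

lemma window_entropy_le_card:
  fixes \<mu> :: "('d, 'a::finite) config measure"
  assumes "shift_prob \<mu>" "finite J"
  shows "window_entropy \<mu> J \<le> real (card J) * ln (real CARD('a))"
proof -
  interpret information_space \<mu> "exp 1"
    using shift_prob_information_space[OF assms(1)] .
  have img: "(\<lambda>x. restrict x J) ` space \<mu> = words J"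
    unfolding shift_prob_space[OF assms(1)] range_restrict_eq_words ..
  have "window_entropy \<mu> J \<le> log (exp 1) (real (card ((\<lambda>x. restrict x J) ` space \<mu>)))"
    using entropy_le_card[OF simple_distributedI[OF simple_function_restrict[OF assms]
          measure_nonneg refl]]
    unfolding window_entropy_eq_entropy[OF assms] img .
  also have "\<dots> = real (card J) * ln (real CARD('a))"
    unfolding img card_words[OF assms(2)] by (simp add: log_def ln_realpow)
  finally show ?thesis .
qed

lemma window_entropy_empty: "shift_prob (\<mu>::('d, 'a::finite) config measure) \<Longrightarrow> window_entropy \<mu> {} = 0"
  using window_entropy_nonneg[of \<mu> "{}"] window_entropy_le_card[of \<mu> "{}"] by simp

lemma window_entropy_Un_le:
  fixes \<mu> :: "('d, 'a::finite) config measure"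
  assumes "shift_prob \<mu>" "finite J" "finite H"
  shows "window_entropy \<mu> (J \<union> H) \<le> window_entropy \<mu> J + window_entropy \<mu> H"
proof -
  interpret information_space \<mu> "exp 1"
    using shift_prob_information_space[OF assms(1)] .
  let ?X = "\<lambda>K (x::('d, 'a) config). restrict x K"
  let ?g = "\<lambda>w. (restrict w J, restrict w H)"
  let ?H = "\<lambda>X. entropy (exp 1) (count_space (X ` space \<mu>)) X"
  have fJH: "finite (J \<union> H)" using assms by auto
  have img: "?X K ` space \<mu> = words K" for K
    unfolding shift_prob_space[OF assms(1)] range_restrict_eq_words ..
  have H_eq: "window_entropy \<mu> K = ?H (?X K)" if "finite K" for K
    unfolding img by (rule window_entropy_eq_entropy[OF assms(1) that])
  have "inj_on ?g (words (J \<union> H))"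
    by (rule inj_onI) (auto simp: words_def fun_eq_iff PiE_def extensional_def restrict_def,
        metis UnE)
  then have inj: "inj_on ?g (?X (J \<union> H) ` space \<mu>)"
    unfolding img .
  have pair: "?g \<circ> ?X (J \<union> H) = (\<lambda>x. (?X J x, ?X H x))"
    by (auto simp: fun_eq_iff restrict_def)
  have "window_entropy \<mu> (J \<union> H) = ?H (?g \<circ> ?X (J \<union> H))"
    unfolding H_eq[OF fJH]
    by (rule entropy_of_inj[OF simple_function_restrict[OF assms(1) fJH] inj, symmetric])
  also have "\<dots> = ?H (?X J) + conditional_entropy (exp 1) (count_space (?X H ` space \<mu>))
      (count_space (?X J ` space \<mu>)) (?X H) (?X J)"
    unfolding pair by (rule entropy_chain_rule[OF simple_function_restrict[OF assms(1,2)]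
          simple_function_restrict[OF assms(1,3)]])
  also have "\<dots> \<le> window_entropy \<mu> J + window_entropy \<mu> H"
    using conditional_entropy_less_eq_entropy[OF simple_function_restrict[OF assms(1,3)]
        simple_function_restrict[OF assms(1,2)]]
    by (simp add: H_eq assms)
  finally show ?thesis .
qed

lemma window_entropy_UN_le:
  fixes \<mu> :: "('d, 'a::finite) config measure"
  assumes "shift_prob \<mu>" "finite I" "\<And>j. j \<in> I \<Longrightarrow> finite (S j)"
  shows "window_entropy \<mu> (\<Union>j\<in>I. S j) \<le> (\<Sum>j\<in>I. window_entropy \<mu> (S j))"
  using assms(2,3)
proof (induction I rule: finite_induct)
  case empty
  then show ?case using window_entropy_empty[OF assms(1)] by simp
next
  case (insert j I)
  have "window_entropy \<mu> (\<Union>i\<in>insert j I. S i) \<le> window_entropy \<mu> (S j) + window_entropy \<mu> (\<Union>i\<in>I. S i)"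
    using window_entropy_Un_le[OF assms(1)] insert by simp
  also have "\<dots> \<le> window_entropy \<mu> (S j) + (\<Sum>i\<in>I. window_entropy \<mu> (S i))"
    using insert by simp
  finally show ?case using insert by simp
qed

section \<open>The entropy as an infimum over boxes\<close>

lemma box_PiE: "box n = PiE UNIV (\<lambda>_. {0..<int n})"
  unfolding PiE_UNIV_domain box_def Pi_def by auto

lemma finite_box [simp]: "finite (box n :: ('d::finite \<Rightarrow> int) set)"
  unfolding box_PiE by (intro finite_PiE) auto

lemma card_box: "card (box n :: ('d::finite \<Rightarrow> int) set) = n ^ CARD('d)"
  unfolding box_PiE by (simp add: card_PiE)

lemma box_mono: "m \<le> n \<Longrightarrow> box m \<subseteq> box n"
  unfolding box_def by (smt (verit, best) Collect_mono of_nat_mono)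

lemma div_in_box:
  assumes "0 < m" "i \<in> box (q * m)"
  shows "(\<lambda>k. i k div int m) \<in> box q"
  unfolding box_def
proof safe
  fix k
  have ik: "0 \<le> i k" "i k < int q * int m" using assms(2) by (auto simp: box_def)
  then show "0 \<le> i k div int m"
    using assms(1) by (simp add: pos_imp_zdiv_nonneg_iff)
  have "0 \<le> i k mod int m"
    using assms(1) by simp
  then have "i k div int m * int m \<le> i k"
    using minus_div_mult_eq_mod[of "i k" "int m"] by linarith
  then have "i k div int m * int m < int q * int m"
    using ik(2) by linarith
  then show "i k div int m < int q"
    by (rule mult_right_less_imp_less) simp
qed

lemma box_mult_eq_UN_translate:
  assumes "0 < m"
  shows "box (q * m) = (\<Union>j\<in>box q. translate_sites (\<lambda>k. int m * j k) (box m))"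
proof (intro equalityI subsetI)
  fix i :: "'d \<Rightarrow> int" assume i: "i \<in> box (q * m)"
  define j where "j = (\<lambda>k. i k div int m)"
  define r where "r = (\<lambda>k. i k mod int m)"
  have "j \<in> box q"
    unfolding j_def using assms i by (rule div_in_box)
  moreover have "r \<in> box m"
    unfolding box_def r_def using assms by auto
  moreover have "i = (\<lambda>k. r k + int m * j k)"
    by (auto simp: r_def j_def fun_eq_iff)
  ultimately show "i \<in> (\<Union>j\<in>box q. translate_sites (\<lambda>k. int m * j k) (box m))"
    unfolding translate_sites_def by blast
next
  fix i :: "'d \<Rightarrow> int" assume "i \<in> (\<Union>j\<in>box q. translate_sites (\<lambda>k. int m * j k) (box m))"
  then obtain j r where j: "j \<in> box q" and r: "r \<in> box m" and i: "i = (\<lambda>k. r k + int m * j k)"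
    unfolding translate_sites_def by blast
  show "i \<in> box (q * m)"
    unfolding box_def
  proof safe
    fix k
    have "0 \<le> r k" "r k < int m" "0 \<le> j k" "j k < int q"
      using j r unfolding box_def by auto
    then show "0 \<le> i k"
      unfolding i by simp
    have "i k < int m * (j k + 1)"
      unfolding i using \<open>r k < int m\<close> by (simp add: algebra_simps)
    also have "\<dots> \<le> int m * int q"
      using \<open>j k < int q\<close> by (intro mult_left_mono) auto
    finally show "i k < int (q * m)"
      by (simp add: mult.commute)
  qed
qed

lemma window_entropy_box_mult_le:
  fixes \<mu> :: "('d::finite, 'a::finite) config measure"
  assumes "\<mu> \<in> invariant_measures" "0 < m"
  shows "window_entropy \<mu> (box (q * m)) \<le> real q ^ CARD('d) * window_entropy \<mu> (box m)"
proof -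
  have "window_entropy \<mu> (box (q * m)) \<le>
      (\<Sum>j\<in>box q. window_entropy \<mu> (translate_sites (\<lambda>k. int m * j k) (box m)))"
    unfolding box_mult_eq_UN_translate[OF assms(2)]
    by (rule window_entropy_UN_le[OF invariant_measures_shift_prob[OF assms(1)]]) auto
  also have "\<dots> = (\<Sum>j\<in>(box q :: ('d \<Rightarrow> int) set). window_entropy \<mu> (box m))"
    using window_entropy_translate[OF assms(1)] by simp
  finally show ?thesis by (simp add: card_box)
qed

lemma window_entropy_box_le:
  fixes \<mu> :: "('d::finite, 'a::finite) config measure"
  assumes inv: "\<mu> \<in> invariant_measures" and m: "0 < m" "q * m \<le> n"
  shows "window_entropy \<mu> (box n) \<le> real q ^ CARD('d) * window_entropy \<mu> (box m) +
           (real n ^ CARD('d) - real (q * m) ^ CARD('d)) * ln (real CARD('a))"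
proof -
  have sp: "shift_prob \<mu>" using inv by (rule invariant_measures_shift_prob)
  have sub: "box (q * m) \<subseteq> (box n :: ('d \<Rightarrow> int) set)" using m by (intro box_mono)
  then have "window_entropy \<mu> (box n) =
      window_entropy \<mu> (box (q * m) \<union> (box n - box (q * m)))"
    by (simp add: Un_absorb1)
  also have "\<dots> \<le> window_entropy \<mu> (box (q * m)) + window_entropy \<mu> (box n - box (q * m))"
    by (rule window_entropy_Un_le[OF sp]) auto
  also have "window_entropy \<mu> (box (q * m)) \<le> real q ^ CARD('d) * window_entropy \<mu> (box m)"
    by (rule window_entropy_box_mult_le[OF inv m(1)])
  also have "window_entropy \<mu> (box n - box (q * m)) \<le>
      real (card (box n - box (q * m) :: ('d \<Rightarrow> int) set)) * ln (real CARD('a))"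
    by (rule window_entropy_le_card[OF sp]) simp
  also have "real (card (box n - box (q * m) :: ('d \<Rightarrow> int) set)) =
      real n ^ CARD('d) - real (q * m) ^ CARD('d)"
    using sub m(2) by (simp add: card_Diff_subset card_box of_nat_diff power_mono)
  finally show ?thesis by simp
qed

definition block_entropy_density :: "('d::finite, 'a::finite) config measure \<Rightarrow> nat \<Rightarrow> real" where
  "block_entropy_density \<mu> n = block_entropy \<mu> n / real n ^ CARD('d)"

lemma block_entropy_density_nonneg: "shift_prob \<mu> \<Longrightarrow> 0 \<le> block_entropy_density \<mu> n"
  by (simp add: block_entropy_density_def block_entropy_eq_window_entropy window_entropy_nonneg)

lemma block_entropy_density_le_ln_card:
  fixes \<mu> :: "('d::finite, 'a::finite) config measure"
  assumes "shift_prob \<mu>" "0 < n"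
  shows "block_entropy_density \<mu> n \<le> ln (real CARD('a))"
proof -
  have "window_entropy \<mu> (box n) \<le> real n ^ CARD('d) * ln (real CARD('a))"
    using window_entropy_le_card[OF assms(1) finite_box, of n] by (simp add: card_box)
  then show ?thesis
    using assms(2)
    by (simp add: block_entropy_density_def block_entropy_eq_window_entropy divide_le_eq mult.commute)
qed

lemma tiling_density_le:
  fixes H N M Q e c :: real
  assumes "H \<le> Q ^ D * (M ^ D * e) + (N ^ D - (Q * M) ^ D) * c"
    and "0 < M" "M \<le> N" "N - M \<le> Q * M" "Q * M \<le> N" "0 \<le> e" "0 \<le> c"
  shows "H / N ^ D \<le> e + (1 - (1 - M / N) ^ D) * c"
proof -
  define t where "t = (Q * M / N) ^ D"
  have N0: "0 < N" using assms(2,3) by simp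
  have "0 \<le> Q * M" using assms(3,4) by linarith
  then have t1: "t \<le> 1"
    unfolding t_def using assms(5) N0 by (intro power_le_one) (auto simp: divide_le_eq)
  have t2: "(1 - M / N) ^ D \<le> t" unfolding t_def
  proof (rule power_mono)
    have "1 - M / N = (N - M) / N" using N0 by (simp add: field_simps)
    then show "1 - M / N \<le> Q * M / N" using assms(4) N0 by (simp add: divide_right_mono)
    show "0 \<le> 1 - M / N" using assms(3) N0 by (simp add: field_simps)
  qed
  have "H / N ^ D \<le> (Q ^ D * (M ^ D * e) + (N ^ D - (Q * M) ^ D) * c) / N ^ D"
    using assms(1) N0 by (simp add: divide_right_mono)
  also have "\<dots> = t * e + (1 - t) * c"
    unfolding t_def using N0 by (simp add: field_simps power_mult_distrib power_divide)
  also have "\<dots> \<le> e + (1 - (1 - M / N) ^ D) * c"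
  proof -
    have "(1 - t) * c \<le> (1 - (1 - M / N) ^ D) * c"
      using t2 assms(7) by (intro mult_right_mono) auto
    then show ?thesis using mult_right_mono[OF t1 assms(6)] by simp
  qed
  finally show ?thesis .
qed

text \<open>Fekete's argument: tile the box of side \<open>n\<close> by \<open>(n div m)\<^sup>d\<close> translates of the box of
  side \<open>m\<close> and bound the entropy of the leftover sites trivially.\<close>

lemma block_entropy_density_le_smaller_box:
  fixes \<mu> :: "('d::finite, 'a::finite) config measure"
  assumes inv: "\<mu> \<in> invariant_measures" and m: "0 < m" "m \<le> n"
  shows "block_entropy_density \<mu> n \<le>
    block_entropy_density \<mu> m + (1 - (1 - real m / real n) ^ CARD('d)) * ln (real CARD('a))"
proof -
  have qm: "n div m * m \<le> n" by (simp add: div_times_less_eq_dividend)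
  have "n < n div m * m + m" using m(1)
    by (metis add.commute add_less_cancel_right mod_less_divisor mod_mult_div_eq mult.commute)
  then have "real n - real m \<le> real (n div m) * real m"
    by (metis add_diff_cancel_right' diff_le_eq less_imp_le of_nat_add of_nat_less_iff of_nat_mult)
  moreover have "real (n div m) * real m \<le> real n"
    using qm by (metis of_nat_le_iff of_nat_mult)
  moreover have "window_entropy \<mu> (box n) \<le> real (n div m) ^ CARD('d) *
      (real m ^ CARD('d) * block_entropy_density \<mu> m) +
      (real n ^ CARD('d) - (real (n div m) * real m) ^ CARD('d)) * ln (real CARD('a))"
    using window_entropy_box_le[OF inv m(1) qm] m(1)
    by (simp add: block_entropy_density_def block_entropy_eq_window_entropy)
  ultimately show ?thesis
    unfolding block_entropy_density_def[of \<mu> n] block_entropy_eq_window_entropy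
    using m block_entropy_density_nonneg[OF invariant_measures_shift_prob[OF inv]]
    by (intro tiling_density_le) auto
qed

lemma block_entropy_density_tendsto_INF:
  fixes \<mu> :: "('d::finite, 'a::finite) config measure"
  assumes inv: "\<mu> \<in> invariant_measures"
  shows "block_entropy_density \<mu> \<longlonglongrightarrow> (INF m\<in>{1..}. block_entropy_density \<mu> m)"
proof -
  let ?L = "INF m\<in>{1..}. block_entropy_density \<mu> m"
  have bdd: "bdd_below (block_entropy_density \<mu> ` {1..})"
    using block_entropy_density_nonneg[OF invariant_measures_shift_prob[OF inv]] by (intro bdd_belowI2)
  show ?thesis
  proof (rule order_tendstoI)
    fix y assume "y < ?L"
    moreover have "?L \<le> block_entropy_density \<mu> n" if "1 \<le> n" for n
      by (rule cINF_lower[OF bdd]) (use that in simp)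
    ultimately show "eventually (\<lambda>n. y < block_entropy_density \<mu> n) sequentially"
      unfolding eventually_sequentially by (intro exI[of _ 1]) fastforce
  next
    fix y assume y: "?L < y"
    then obtain m where m: "m \<in> {1..}" "block_entropy_density \<mu> m < ?L + (y - ?L) / 2"
      using cINF_less_iff[OF _ bdd, of "?L + (y - ?L) / 2"] by auto
    have "(\<lambda>n. real m * (1 / real n)) \<longlonglongrightarrow> 0"
      by (rule tendsto_mult_right_zero[OF lim_inverse_n'])
    then have "(\<lambda>n. (1 - (1 - real m / real n) ^ CARD('d)) * ln (real CARD('a))) \<longlonglongrightarrow>
        (1 - (1 - 0) ^ CARD('d)) * ln (real CARD('a))"
      by (intro tendsto_intros) simp
    then have "eventually (\<lambda>n. (1 - (1 - real m / real n) ^ CARD('d)) * ln (real CARD('a)) <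
        (y - ?L) / 2) sequentially"
      by (rule order_tendstoD(2)) (use y in simp)
    with eventually_ge_at_top[of m]
    show "eventually (\<lambda>n. block_entropy_density \<mu> n < y) sequentially"
    proof eventually_elim
      case (elim n)
      then have "block_entropy_density \<mu> n \<le> block_entropy_density \<mu> m +
          (1 - (1 - real m / real n) ^ CARD('d)) * ln (real CARD('a))"
        using m by (intro block_entropy_density_le_smaller_box[OF inv]) auto
      also have "\<dots> < (?L + (y - ?L) / 2) + (y - ?L) / 2"
        using m(2) elim(2) by (rule add_strict_mono)
      finally show ?case by (simp add: field_simps)
    qed
  qed
qed

lemma ms_entropy_eq_INF:
  fixes \<mu> :: "('d::finite, 'a::finite) config measure"
  assumes "\<mu> \<in> invariant_measures"
  shows "ms_entropy \<mu> = (INF m\<in>{1..}. block_entropy_density \<mu> m)"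
proof -
  have "ms_entropy \<mu> = lim (block_entropy_density \<mu>)"
    unfolding ms_entropy_def block_entropy_density_def of_nat_power ..
  then show ?thesis
    using block_entropy_density_tendsto_INF[OF assms] by (simp add: limI)
qed

lemma ms_entropy_le_block_entropy_density:
  fixes \<mu> :: "('d::finite, 'a::finite) config measure"
  assumes "\<mu> \<in> invariant_measures" "1 \<le> m"
  shows "ms_entropy \<mu> \<le> block_entropy_density \<mu> m"
  unfolding ms_entropy_eq_INF[OF assms(1)]
  using assms block_entropy_density_nonneg[OF invariant_measures_shift_prob[OF assms(1)]]
  by (intro cINF_lower bdd_belowI2) auto

lemma ms_entropy_greatest:
  fixes \<mu> :: "('d::finite, 'a::finite) config measure"
  assumes "\<mu> \<in> invariant_measures" "\<And>m. 1 \<le> m \<Longrightarrow> X \<le> block_entropy_density \<mu> m"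
  shows "X \<le> ms_entropy \<mu>"
  unfolding ms_entropy_eq_INF[OF assms(1)] using assms(2) by (intro cINF_greatest) auto

lemma ms_entropy_nonneg:
  fixes \<mu> :: "('d::finite, 'a::finite) config measure"
  assumes "\<mu> \<in> invariant_measures"
  shows "0 \<le> ms_entropy \<mu>"
  using assms block_entropy_density_nonneg[OF invariant_measures_shift_prob[OF assms]]
  by (rule ms_entropy_greatest)

lemma ms_entropy_le_ln_card:
  fixes \<mu> :: "('d::finite, 'a::finite) config measure"
  assumes "\<mu> \<in> invariant_measures"
  shows "ms_entropy \<mu> \<le> ln (real CARD('a))"
  using ms_entropy_le_block_entropy_density[OF assms, of 1]
    block_entropy_density_le_ln_card[OF invariant_measures_shift_prob[OF assms], of 1] by simp

section \<open>Continuous observables\<close>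

lemma topspace_shift_topology [simp]: "topspace (shift_topology :: ('d, 'a) config topology) = UNIV"
  by (simp add: shift_topology_def)

lemma compact_space_shift_topology:
  "compact_space (shift_topology :: ('d, 'a::finite) config topology)"
  unfolding shift_topology_def
  by (simp add: compact_space_product_topology compact_space_discrete_topology)

lemma openin_cylinder:
  assumes "finite J"
  shows "openin shift_topology (cylinder J w)"
  unfolding shift_topology_def openin_product_topology_alt
proof (intro ballI)
  fix x assume x: "x \<in> cylinder J w"
  define U where "U = (\<lambda>i. if i \<in> J then {w i} else UNIV)"
  have "finite {i \<in> UNIV. U i \<noteq> topspace (discrete_topology UNIV)}"
    by (rule finite_subset[OF _ assms]) (auto simp: U_def split: if_splits)
  moreover have "x \<in> PiE UNIV U" "PiE UNIV U \<subseteq> cylinder J w"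
    using x by (auto simp: U_def cylinder_def PiE_UNIV_domain Pi_def)
  ultimately show "\<exists>U. finite {i \<in> UNIV. U i \<noteq> topspace (discrete_topology UNIV)} \<and>
      (\<forall>i\<in>UNIV. openin (discrete_topology UNIV) (U i)) \<and> x \<in> PiE UNIV U \<and> PiE UNIV U \<subseteq> cylinder J w"
    by auto
qed

lemma closedin_cylinder:
  fixes w :: "('d \<Rightarrow> int) \<Rightarrow> 'a::finite"
  assumes "finite J"
  shows "closedin shift_topology (cylinder J w)"
proof -
  have "UNIV - cylinder J w = (\<Union>v\<in>{v\<in>words J. v \<noteq> restrict w J}. cylinder J v)"
  proof safe
    fix x assume "x \<notin> cylinder J w"
    then have "restrict x J \<noteq> restrict w J" by (auto simp: cylinder_def restrict_def fun_eq_iff)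
    then show "x \<in> (\<Union>v\<in>{v\<in>words J. v \<noteq> restrict w J}. cylinder J v)"
      by (intro UN_I[of "restrict x J"]) (auto simp: mem_cylinder_restrict)
  next
    fix x v assume v: "v \<in> words J" "v \<noteq> restrict w J" "x \<in> cylinder J v" "x \<in> cylinder J w"
    have "v = restrict x J" using v(1,3) by (simp add: cylinder_eq_restrict)
    moreover have "restrict x J = restrict w J" using v(4) by (auto simp: cylinder_def restrict_def)
    ultimately show False using v(2) by simp
  qed simp
  moreover have "openin shift_topology (\<Union>v\<in>{v\<in>words J. v \<noteq> restrict w J}. cylinder J v)"
    using openin_cylinder[OF assms] by (intro openin_Union) auto
  ultimately show ?thesis unfolding closedin_def by simp
qed

lemma continuous_map_uniformly_local:
  fixes \<phi> :: "('d, 'a::finite) config \<Rightarrow> real"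
  assumes cont: "continuous_map shift_topology euclideanreal \<phi>" and e: "0 < e"
  obtains \<Lambda> where "finite \<Lambda>" "\<And>x y. (\<forall>i\<in>\<Lambda>. x i = y i) \<Longrightarrow> \<bar>\<phi> x - \<phi> y\<bar> < e"
proof -
  have "\<exists>\<Lambda>. finite \<Lambda> \<and> (\<forall>y\<in>cylinder \<Lambda> x. \<bar>\<phi> y - \<phi> x\<bar> < e / 2)" for x
  proof -
    let ?U = "{y \<in> topspace shift_topology. \<phi> y \<in> ball (\<phi> x) (e / 2)}"
    have "openin shift_topology ?U" by (rule openin_continuous_map_preimage[OF cont]) simp
    moreover have "x \<in> ?U" using e by simp
    ultimately obtain U where U: "finite {i \<in> UNIV. U i \<noteq> topspace (discrete_topology (UNIV::'a set))}"
      "x \<in> PiE UNIV U" "PiE UNIV U \<subseteq> ?U"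
      unfolding shift_topology_def openin_product_topology_alt by blast
    have "cylinder {i. U i \<noteq> UNIV} x \<subseteq> PiE UNIV U"
      using U(2) by (force simp: cylinder_def PiE_UNIV_domain)
    then have "\<forall>y\<in>cylinder {i. U i \<noteq> UNIV} x. \<bar>\<phi> y - \<phi> x\<bar> < e / 2"
      using U(3) by (force simp: dist_real_def abs_minus_commute)
    then show ?thesis
      using U(1) by auto
  qed
  then obtain L where L: "\<And>x. finite (L x)" "\<And>x y. y \<in> cylinder (L x) x \<Longrightarrow> \<bar>\<phi> y - \<phi> x\<bar> < e / 2"
    by metis
  obtain F where F: "finite F" "F \<subseteq> range (\<lambda>x. cylinder (L x) x)" "UNIV \<subseteq> \<Union>F"
    using compact_space_shift_topology[unfolded compact_space_alt, rule_format,
        of "range (\<lambda>x. cylinder (L x) x)"] openin_cylinder[OF L(1)] mem_cylinder_restrict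
    by (auto simp: cylinder_def)
  then obtain X0 where X0: "finite X0" "F = (\<lambda>x. cylinder (L x) x) ` X0"
    by (meson finite_subset_image)
  show ?thesis
  proof
    show "finite (\<Union>x\<in>X0. L x)" using X0 L by auto
    fix y z :: "('d, 'a) config" assume yz: "\<forall>i\<in>(\<Union>x\<in>X0. L x). y i = z i"
    obtain x where x: "x \<in> X0" "y \<in> cylinder (L x) x" using F(3) X0(2) by auto
    then have "z \<in> cylinder (L x) x" using yz by (auto simp: cylinder_def)
    then have "\<bar>\<phi> z - \<phi> x\<bar> < e / 2" "\<bar>\<phi> y - \<phi> x\<bar> < e / 2"
      using L(2) x(2) by auto
    then show "\<bar>\<phi> y - \<phi> z\<bar> < e" by linarith
  qed
qed

lemma continuous_map_bounded:
  fixes \<phi> :: "('d, 'a::finite) config \<Rightarrow> real"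
  assumes "continuous_map shift_topology euclideanreal \<phi>"
  obtains B where "\<And>x. \<bar>\<phi> x\<bar> \<le> B"
proof -
  obtain \<Lambda> where L: "finite \<Lambda>" "\<And>x y. (\<forall>i\<in>\<Lambda>. x i = y i) \<Longrightarrow> \<bar>\<phi> x - \<phi> y\<bar> < 1"
    using continuous_map_uniformly_local[OF assms zero_less_one] by blast
  have "\<bar>\<phi> x\<bar> \<le> Max ((\<lambda>w. \<bar>\<phi> w\<bar>) ` words \<Lambda>) + 1" for x
  proof -
    have "\<bar>\<phi> x - \<phi> (restrict x \<Lambda>)\<bar> < 1" by (rule L(2)) simp
    moreover have "\<bar>\<phi> (restrict x \<Lambda>)\<bar> \<le> Max ((\<lambda>w. \<bar>\<phi> w\<bar>) ` words \<Lambda>)"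
      by (rule Max_ge) (use L(1) in auto)
    ultimately show ?thesis by linarith
  qed
  then show ?thesis by (rule that)
qed

lemma local_function_eq_sum:
  fixes \<phi> :: "('d, 'a::finite) config \<Rightarrow> real"
  assumes "finite \<Lambda>"
  shows "\<phi> (restrict x \<Lambda>) = (\<Sum>w\<in>words \<Lambda>. \<phi> w * indicator (cylinder \<Lambda> w) x)"
proof -
  have "(\<Sum>w\<in>words \<Lambda>. \<phi> w * indicator (cylinder \<Lambda> w) x) =
      (\<Sum>w\<in>words \<Lambda>. if w = restrict x \<Lambda> then \<phi> w else 0)"
    by (intro sum.cong refl) (auto simp: cylinder_eq_restrict indicator_def)
  also have "\<dots> = \<phi> (restrict x \<Lambda>)"
    using assms by (simp add: sum.delta')
  finally show ?thesis ..
qed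

lemma borel_measurable_local_function:
  fixes \<phi> :: "('d, 'a::finite) config \<Rightarrow> real"
  assumes "finite \<Lambda>"
  shows "(\<lambda>x. \<phi> (restrict x \<Lambda>)) \<in> borel_measurable shift_space"
  unfolding local_function_eq_sum[OF assms] using assms by measurable

lemma integral_local_function:
  fixes \<phi> :: "('d, 'a::finite) config \<Rightarrow> real"
  assumes sp: "shift_prob \<mu>" and "finite \<Lambda>"
  shows "(\<integral>x. \<phi> (restrict x \<Lambda>) \<partial>\<mu>) = (\<Sum>w\<in>words \<Lambda>. \<phi> w * measure \<mu> (cylinder \<Lambda> w))"
proof -
  interpret prob_space \<mu> using sp by (simp add: shift_prob_def)
  have "(\<integral>x. \<phi> (restrict x \<Lambda>) \<partial>\<mu>) = (\<Sum>w\<in>words \<Lambda>. (\<integral>x. \<phi> w * indicator (cylinder \<Lambda> w) x \<partial>\<mu>))"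
    unfolding local_function_eq_sum[OF assms(2)]
    using shift_prob_sets_cylinder[OF sp assms(2)]
    by (intro Bochner_Integration.integral_sum) (auto simp: less_top[symmetric])
  then show ?thesis
    using shift_prob_sets_cylinder[OF sp assms(2)] by simp
qed

lemma borel_measurable_continuous_map:
  fixes \<phi> :: "('d, 'a::finite) config \<Rightarrow> real"
  assumes cont: "continuous_map shift_topology euclideanreal \<phi>"
  shows "\<phi> \<in> borel_measurable shift_space"
proof -
  have "\<exists>\<Lambda>. finite \<Lambda> \<and> (\<forall>x y. (\<forall>i\<in>\<Lambda>. x i = y i) \<longrightarrow> \<bar>\<phi> x - \<phi> y\<bar> < 1 / Suc n)" for n
  proof -
    have pos: "0 < 1 / real (Suc n)" by simp
    obtain \<Lambda> where "finite \<Lambda>" "\<And>x y. (\<forall>i\<in>\<Lambda>. x i = y i) \<Longrightarrow> \<bar>\<phi> x - \<phi> y\<bar> < 1 / Suc n"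
      using continuous_map_uniformly_local[OF cont pos] by blast
    then show ?thesis by blast
  qed
  then obtain L where L: "\<And>n. finite (L n)"
    "\<And>n x y. (\<forall>i\<in>L n. x i = y i) \<Longrightarrow> \<bar>\<phi> x - \<phi> y\<bar> < 1 / Suc n"
    by metis
  show ?thesis
  proof (rule borel_measurable_LIMSEQ_real)
    show "(\<lambda>x. \<phi> (restrict x (L n))) \<in> borel_measurable shift_space" for n
      by (rule borel_measurable_local_function[OF L(1)])
    fix x
    have "(\<lambda>n. \<phi> (restrict x (L n)) - \<phi> x) \<longlonglongrightarrow> 0"
    proof (rule Lim_null_comparison)
      show "eventually (\<lambda>n. norm (\<phi> (restrict x (L n)) - \<phi> x) \<le> 1 / Suc n) sequentially"
        using L(2)[of n "restrict x (L n)" x for n] by (auto intro!: always_eventually less_imp_le)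
    qed (rule LIMSEQ_Suc[OF lim_inverse_n'])
    then show "(\<lambda>n. \<phi> (restrict x (L n))) \<longlonglongrightarrow> \<phi> x" by (rule LIM_zero_cancel)
  qed
qed

lemma (in prob_space) abs_integral_le_const:
  fixes f :: "'a \<Rightarrow> real"
  assumes "integrable M f" "\<And>x. \<bar>f x\<bar> \<le> B"
  shows "\<bar>integral\<^sup>L M f\<bar> \<le> B"
proof -
  have "\<bar>integral\<^sup>L M f\<bar> \<le> integral\<^sup>L M (\<lambda>x. \<bar>f x\<bar>)"
    using integral_norm_bound[of M f] by simp
  also have "\<dots> \<le> B"
    using assms by (intro integral_le_const) auto
  finally show ?thesis .
qed

lemma integrable_bounded_measurable_shift:
  fixes f :: "('d, 'a) config \<Rightarrow> real"
  assumes "shift_prob \<mu>" "f \<in> borel_measurable shift_space" "\<And>x. \<bar>f x\<bar> \<le> B"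
  shows "integrable \<mu> f"
proof -
  interpret prob_space \<mu> using assms(1) by (simp add: shift_prob_def)
  show ?thesis
    using assms shift_prob_borel_measurable[OF assms(1)]
    by (intro integrable_const_bound[where B=B]) auto
qed

lemma integrable_continuous_map:
  fixes \<phi> :: "('d, 'a::finite) config \<Rightarrow> real"
  assumes "continuous_map shift_topology euclideanreal \<phi>" "shift_prob \<mu>"
  shows "integrable \<mu> \<phi>"
  using continuous_map_bounded[OF assms(1)]
  by (metis integrable_bounded_measurable_shift[OF assms(2)
        borel_measurable_continuous_map[OF assms(1)]])

lemma abs_integral_continuous_map_le:
  fixes \<phi> :: "('d, 'a::finite) config \<Rightarrow> real"
  assumes "continuous_map shift_topology euclideanreal \<phi>" "shift_prob \<mu>" "\<And>x. \<bar>\<phi> x\<bar> \<le> B"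
  shows "\<bar>integral\<^sup>L \<mu> \<phi>\<bar> \<le> B"
  using assms(2) integrable_continuous_map[OF assms(1,2)] assms(3)
  by (simp add: shift_prob_def prob_space.abs_integral_le_const)

lemma integral_continuous_map_approx:
  fixes \<phi> :: "('d, 'a::finite) config \<Rightarrow> real"
  assumes cont: "continuous_map shift_topology euclideanreal \<phi>" and sp: "shift_prob \<mu>"
    and L: "finite \<Lambda>" "\<And>x y. (\<forall>i\<in>\<Lambda>. x i = y i) \<Longrightarrow> \<bar>\<phi> x - \<phi> y\<bar> < e"
  shows "\<bar>integral\<^sup>L \<mu> \<phi> - (\<Sum>w\<in>words \<Lambda>. \<phi> w * measure \<mu> (cylinder \<Lambda> w))\<bar> \<le> e"
proof -
  interpret prob_space \<mu> using sp by (simp add: shift_prob_def)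
  have i1: "integrable \<mu> \<phi>" by (rule integrable_continuous_map[OF cont sp])
  obtain B where "\<And>x. \<bar>\<phi> x\<bar> \<le> B" using continuous_map_bounded[OF cont] by blast
  then have i2: "integrable \<mu> (\<lambda>x. \<phi> (restrict x \<Lambda>))"
    by (intro integrable_bounded_measurable_shift[OF sp borel_measurable_local_function[OF L(1)]])
  have "integral\<^sup>L \<mu> \<phi> - (\<Sum>w\<in>words \<Lambda>. \<phi> w * measure \<mu> (cylinder \<Lambda> w)) =
      (\<integral>x. \<phi> x - \<phi> (restrict x \<Lambda>) \<partial>\<mu>)"
    unfolding integral_local_function[OF sp L(1), symmetric] using i1 i2 by simp
  also have "\<bar>\<dots>\<bar> \<le> e"
    using i1 i2 L(2) by (intro abs_integral_le_const) (auto intro: less_imp_le)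
  finally show ?thesis .
qed

section \<open>Sequential compactness of the invariant measures\<close>

lemma convergent_subseq_finite_family:
  fixes g :: "'b \<Rightarrow> nat \<Rightarrow> real"
  assumes "finite W" "\<And>w. w \<in> W \<Longrightarrow> bounded (range (g w))"
  shows "\<exists>r. strict_mono r \<and> (\<forall>w\<in>W. convergent (\<lambda>k. g w (r k)))"
  using assms
proof (induction W rule: finite_induct)
  case empty
  show ?case by (intro exI[of _ id]) (auto simp: strict_mono_def)
next
  case (insert w0 W)
  obtain r where r: "strict_mono r" "\<forall>w\<in>W. convergent (\<lambda>k. g w (r k))"
    using insert by auto
  have "bounded (range (\<lambda>k. g w0 (r k)))"
    using insert.prems[of w0] by (rule bounded_subset) auto
  then obtain l r' where r': "strict_mono r'" "((\<lambda>k. g w0 (r k)) \<circ> r') \<longlonglongrightarrow> l"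
    using bounded_imp_convergent_subsequence by blast
  have "convergent (\<lambda>k. g w (r (r' k)))" if "w \<in> insert w0 W" for w
  proof (cases "w = w0")
    case True
    then show ?thesis using r'(2) by (auto simp: convergent_def o_def)
  next
    case False
    then have "convergent ((\<lambda>k. g w (r k)) \<circ> r')"
      using that r(2) r'(1) by (intro convergent_subseq_convergent) auto
    then show ?thesis by (simp add: o_def)
  qed
  moreover have "strict_mono (r \<circ> r')" using r(1) r'(1) by (rule strict_mono_o)
  ultimately show ?case by auto
qed

lemma convergent_subseq_diagonal:
  fixes f :: "nat \<Rightarrow> 'b \<Rightarrow> nat \<Rightarrow> real"
  assumes "\<And>n. finite (W n)" "\<And>n w. w \<in> W n \<Longrightarrow> bounded (range (f n w))"
  shows "\<exists>r. strict_mono r \<and> (\<forall>n. \<forall>w\<in>W n. convergent (\<lambda>k. f n w (r k)))"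
proof -
  define P where "P = (\<lambda>n (s :: nat \<Rightarrow> nat). \<forall>w\<in>W n. convergent (\<lambda>k. f n w (s k)))"
  interpret subseqs P
  proof
    fix n and s :: "nat \<Rightarrow> nat"
    have "bounded (range (\<lambda>k. f n w (s k)))" if "w \<in> W n" for w
      using assms(2)[OF that] by (rule bounded_subset) auto
    then obtain r where "strict_mono r" "\<forall>w\<in>W n. convergent (\<lambda>k. f n w (s (r k)))"
      using convergent_subseq_finite_family[OF assms(1), of n "\<lambda>w k. f n w (s k)"] by auto
    then show "\<exists>r'. strict_mono r' \<and> P n (s \<circ> r')" unfolding P_def by (auto simp: o_def)
  qed
  have stable: "P n (s \<circ> r)" if "strict_mono r" "P n s" for r s n
  proof -
    have "convergent ((\<lambda>k. f n w (s k)) \<circ> r)" if "w \<in> W n" for w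
      using \<open>P n s\<close> \<open>strict_mono r\<close> that unfolding P_def by (intro convergent_subseq_convergent) auto
    then show ?thesis unfolding P_def by (simp add: o_def)
  qed
  have "convergent (\<lambda>k. f n w (diagseq k))" if "w \<in> W n" for n w
  proof -
    have "P n (diagseq \<circ> (+) (Suc n))" by (rule diagseq_holds[OF stable]) auto
    then have "convergent (\<lambda>k. f n w (diagseq (k + Suc n)))"
      using that unfolding P_def by (simp add: o_def add.commute)
    then obtain l where "(\<lambda>k. f n w (diagseq (k + Suc n))) \<longlonglongrightarrow> l"
      by (auto simp: convergent_def)
    then have "(\<lambda>k. f n w (diagseq k)) \<longlonglongrightarrow> l" by (rule LIMSEQ_offset)
    then show ?thesis by (auto simp: convergent_def)
  qed
  then show ?thesis using subseq_diagseq by blast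
qed

definition centered_box :: "nat \<Rightarrow> ('d \<Rightarrow> int) set" where
  "centered_box n = {i. \<forall>k. \<bar>i k\<bar> \<le> int n}"

lemma finite_centered_box [simp]: "finite (centered_box n :: ('d::finite \<Rightarrow> int) set)"
proof -
  have "(centered_box n :: ('d \<Rightarrow> int) set) = PiE UNIV (\<lambda>_. {- int n..int n})"
    unfolding PiE_UNIV_domain centered_box_def Pi_def by (simp add: abs_le_iff minus_le_iff conj_commute)
  then show ?thesis by (simp add: finite_PiE)
qed

lemma finite_subset_centered_box:
  assumes "finite (J :: ('d::finite \<Rightarrow> int) set)"
  obtains n where "J \<subseteq> centered_box n"
proof
  define n where "n = Max (insert 0 ((\<lambda>(i, k). nat \<bar>i k\<bar>) ` (J \<times> UNIV)))"
  have "\<bar>i k\<bar> \<le> int n" if "i \<in> J" for i k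
  proof -
    have "nat \<bar>i k\<bar> \<le> n"
      unfolding n_def by (rule Max_ge) (use assms that in auto)
    then show ?thesis by simp
  qed
  then show "J \<subseteq> centered_box n"
    by (auto simp: centered_box_def)
qed

definition cylinders_converge ::
    "(nat \<Rightarrow> ('d, 'a) config measure) \<Rightarrow> ('d, 'a) config measure \<Rightarrow> bool" where
  "cylinders_converge \<mu> \<nu> \<longleftrightarrow>
     (\<forall>J w. finite J \<longrightarrow> (\<lambda>k. measure (\<mu> k) (cylinder J w)) \<longlonglongrightarrow> measure \<nu> (cylinder J w))"

lemma space_PiM_words: "space (PiM J (\<lambda>_. count_space UNIV)) = words J"
  by (simp add: space_PiM words_def)

lemma Inter_prod_emb_nonempty:
  fixes Xs :: "nat \<Rightarrow> (('d \<Rightarrow> int) \<Rightarrow> 'a::finite) set"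
  assumes "\<And>i. finite (Js i)" "decseq (\<lambda>i. prod_emb UNIV (\<lambda>_. count_space UNIV) (Js i) (Xs i))"
    and "\<And>i. Xs i \<inter> words (Js i) \<noteq> {}"
  shows "(\<Inter>i. prod_emb UNIV (\<lambda>_. count_space UNIV) (Js i) (Xs i)) \<noteq> {}"
proof (rule compact_space_imp_nest[OF compact_space_shift_topology _ _ assms(2)])
  fix i
  show "closedin shift_topology (prod_emb UNIV (\<lambda>_. count_space UNIV) (Js i) (Xs i))"
    unfolding prod_emb_eq_UN_cylinders using assms(1) closedin_cylinder by (intro closedin_Union) auto
  obtain w where "w \<in> Xs i \<inter> words (Js i)"
    using assms(3) by blast
  moreover have "w \<in> cylinder (Js i) w" by (simp add: cylinder_def)
  ultimately show "prod_emb UNIV (\<lambda>_. count_space UNIV) (Js i) (Xs i) \<noteq> {}"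
    unfolding prod_emb_eq_UN_cylinders by blast
qed

text \<open>Kolmogorov's extension theorem for the full shift.\<close>

locale cylinder_weights =
  fixes q :: "('d \<Rightarrow> int) set \<Rightarrow> (('d \<Rightarrow> int) \<Rightarrow> 'a::finite) \<Rightarrow> real"
  assumes nonneg: "finite J \<Longrightarrow> 0 \<le> q J w"
    and refine: "J \<subseteq> H \<Longrightarrow> finite H \<Longrightarrow> w \<in> words J \<Longrightarrow>
      q J w = (\<Sum>v\<in>{v\<in>words H. restrict v J = w}. q H v)"
    and total: "finite H \<Longrightarrow> (\<Sum>v\<in>words H. q H v) = 1"
begin

definition window_distribution :: "('d \<Rightarrow> int) set \<Rightarrow> (('d \<Rightarrow> int) \<Rightarrow> 'a) measure" where
  "window_distribution J = distr (point_measure (words J) (\<lambda>w. ennreal (q J w)))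
     (PiM J (\<lambda>_. count_space UNIV)) (\<lambda>x. x)"

lemma sets_window_distribution:
  "sets (window_distribution J) = sets (PiM J (\<lambda>_. count_space UNIV))"
  by (simp add: window_distribution_def)

lemma space_window_distribution: "space (window_distribution J) = words J"
  by (simp add: window_distribution_def space_PiM_words)

lemma emeasure_window_distribution:
  assumes "finite J" "X \<in> sets (PiM J (\<lambda>_. count_space UNIV))"
  shows "emeasure (window_distribution J) X = ennreal (\<Sum>w\<in>X \<inter> words J. q J w)"
proof -
  have "emeasure (window_distribution J) X =
      emeasure (point_measure (words J) (\<lambda>w. ennreal (q J w))) (X \<inter> words J)"
    unfolding window_distribution_def using assms(2)
    by (subst emeasure_distr) (auto simp: space_PiM_words space_point_measure)
  also have "\<dots> = ennreal (\<Sum>w\<in>X \<inter> words J. q J w)"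
    using assms(1) nonneg by (subst emeasure_point_measure_finite) (auto intro: sum_ennreal)
  finally show ?thesis .
qed

lemma projective_family_window_distribution:
  "projective_family UNIV window_distribution (\<lambda>_. count_space UNIV)"
proof (rule projective_family.intro)
  fix J H :: "('d \<Rightarrow> int) set" assume JH: "J \<subseteq> H" "finite H" "H \<subseteq> UNIV"
  have fJ: "finite J" using JH finite_subset by auto
  have mr: "(\<lambda>f. restrict f J) \<in> measurable (window_distribution H) (PiM J (\<lambda>_. count_space UNIV))"
    using measurable_restrict_subset[OF JH(1)]
    by (simp add: measurable_cong_sets[OF sets_window_distribution refl])
  show "window_distribution J =
      distr (window_distribution H) (PiM J (\<lambda>_. count_space UNIV)) (\<lambda>f. restrict f J)"
  proof (rule measure_eqI)
    fix X assume "X \<in> sets (window_distribution J)"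
    then have X: "X \<in> sets (PiM J (\<lambda>_. count_space UNIV))" by (simp add: sets_window_distribution)
    have X': "(\<lambda>f. restrict f J) -` X \<inter> words H \<in> sets (PiM H (\<lambda>_. count_space UNIV))"
      using measurable_sets[OF measurable_restrict_subset[OF JH(1)] X] by (simp add: space_PiM_words)
    have "(\<Sum>w\<in>X \<inter> words J. q J w) =
        (\<Sum>w\<in>X \<inter> words J. \<Sum>v\<in>{v\<in>(\<lambda>f. restrict f J) -` X \<inter> words H. restrict v J = w}. q H v)"
      by (intro sum.cong refl) (auto simp: refine[OF JH(1,2)] intro!: sum.cong)
    also have "\<dots> = (\<Sum>v\<in>(\<lambda>f. restrict f J) -` X \<inter> words H. q H v)"
      by (rule sum.group) (use JH(2) fJ in auto)
    finally show "emeasure (window_distribution J) X =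
        emeasure (distr (window_distribution H) (PiM J (\<lambda>_. count_space UNIV)) (\<lambda>f. restrict f J)) X"
      using X X' JH(2) fJ
      by (simp add: emeasure_distr[OF mr X] emeasure_window_distribution space_window_distribution
          Int_absorb2)
  qed (simp add: sets_window_distribution)
next
  fix J :: "('d \<Rightarrow> int) set" assume J: "finite J" "J \<subseteq> UNIV"
  show "prob_space (window_distribution J)"
  proof (rule prob_spaceI)
    have "space (window_distribution J) \<in> sets (PiM J (\<lambda>_. count_space UNIV))"
      by (simp add: space_window_distribution flip: space_PiM_words)
    then show "emeasure (window_distribution J) (space (window_distribution J)) = 1"
      using J by (simp add: emeasure_window_distribution space_window_distribution total)
  qed
qed

lemma exists_shift_prob:
  "\<exists>\<nu>. shift_prob \<nu> \<and> (\<forall>J w. finite J \<longrightarrow> measure \<nu> (cylinder J w) = q J (restrict w J))"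
proof -
  interpret PF: projective_family UNIV window_distribution "\<lambda>_. count_space UNIV"
    by (rule projective_family_window_distribution)
  have nest: "(\<Inter>i. prod_emb UNIV (\<lambda>_. count_space UNIV) (Js i) (Xs i)) \<noteq> {}"
    if "\<And>i. Js i \<subseteq> UNIV" "incseq Js" and Js: "\<And>i. finite (Js i)"
      and Xs: "\<And>i. Xs i \<in> sets (PiM (Js i) (\<lambda>_. count_space UNIV))"
      and dec: "decseq (\<lambda>i. prod_emb UNIV (\<lambda>_. count_space UNIV) (Js i) (Xs i))"
      and pos: "0 < (INF i. emeasure (window_distribution (Js i)) (Xs i))" for Js Xs
  proof (rule Inter_prod_emb_nonempty[OF Js dec])
    fix i
    have "0 < emeasure (window_distribution (Js i)) (Xs i)"
      using pos by (rule less_le_trans) (rule INF_lower, simp)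
    then have "(\<Sum>w\<in>Xs i \<inter> words (Js i). q (Js i) w) \<noteq> 0"
      using emeasure_window_distribution[OF Js Xs] by auto
    then show "Xs i \<inter> words (Js i) \<noteq> {}"
      by (metis sum.empty)
  qed
  have sets_lim: "sets PF.lim = sets shift_space"
    unfolding PF.sets_lim by (simp add: shift_space_def)
  have cyl: "emeasure PF.lim (cylinder J w) = ennreal (q J (restrict w J))" if J: "finite J" for J w
  proof -
    have "{restrict w J} = PiE J (\<lambda>i. {w i})"
      using PiE_singleton[of "restrict w J" J] by (simp cong: PiE_cong)
    then have X: "{restrict w J} \<in> sets (PiM J (\<lambda>_. count_space UNIV))"
      by (simp add: sets_PiM_I_finite[OF J])
    have "cylinder J w = prod_emb UNIV (\<lambda>_. count_space UNIV) J {restrict w J}"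
      unfolding prod_emb_eq_UN_cylinders by (simp add: cylinder_restrict)
    moreover have "emeasure PF.lim (prod_emb UNIV (\<lambda>_. count_space UNIV) J {restrict w J}) =
        emeasure (window_distribution J) {restrict w J}"
      by (rule PF.emeasure_lim[OF J _ X nest]) auto
    ultimately have "emeasure PF.lim (cylinder J w) = emeasure (window_distribution J) {restrict w J}"
      by simp
    then show ?thesis
      using emeasure_window_distribution[OF J X] by simp
  qed
  have "prob_space PF.lim"
  proof (rule prob_spaceI)
    have "space PF.lim = cylinder {} (\<lambda>_. undefined)"
      using sets_eq_imp_space_eq[OF sets_lim] by simp
    then show "emeasure PF.lim (space PF.lim) = 1"
      using cyl[of "{}" "\<lambda>_. undefined"] total[of "{}"] by (simp add: words_empty restrict_def)
  qed
  then have "shift_prob PF.lim"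
    using sets_lim by (simp add: shift_prob_def)
  moreover have "measure PF.lim (cylinder J w) = q J (restrict w J)" if "finite J" for J w
    using cyl[OF that] nonneg[OF that] by (simp add: measure_def)
  ultimately show ?thesis by blast
qed

end

lemma convergent_subseq_cylinder_measures:
  fixes \<mu> :: "nat \<Rightarrow> ('d::finite, 'a::finite) config measure"
  assumes sp: "\<And>k. shift_prob (\<mu> k)"
  obtains r where "strict_mono r"
    "\<And>J w. finite J \<Longrightarrow> convergent (\<lambda>k. measure (\<mu> (r k)) (cylinder J w))"
proof -
  have "bounded (range (\<lambda>k. measure (\<mu> k) (cylinder J w)))" for J w
    using shift_prob_abs_measure_le_1[OF sp] by (intro boundedI[of _ 1]) auto
  then obtain r where r: "strict_mono r"
    "\<And>n w. w \<in> words (centered_box n) \<Longrightarrow> convergent (\<lambda>k. measure (\<mu> (r k)) (cylinder (centered_box n) w))"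
    using convergent_subseq_diagonal[of "\<lambda>n. words (centered_box n)"
        "\<lambda>n w k. measure (\<mu> k) (cylinder (centered_box n) w)"] by auto
  have "convergent (\<lambda>k. measure (\<mu> (r k)) (cylinder J w))" if J: "finite J" for J w
  proof -
    obtain n where n: "J \<subseteq> centered_box n" using finite_subset_centered_box[OF J] .
    have "convergent (\<lambda>k. \<Sum>v\<in>{v\<in>words (centered_box n). restrict v J = restrict w J}.
        measure (\<mu> (r k)) (cylinder (centered_box n) v))"
      by (intro convergent_sum r(2)) auto
    then show ?thesis
      using measure_cylinder_eq_sum_refine[OF sp n finite_centered_box restrict_in_words]
      by (simp add: cylinder_restrict)
  qed
  with r(1) show ?thesis by (rule that)
qed

lemma cylinder_weights_lim:
  fixes \<mu> :: "nat \<Rightarrow> ('d, 'a::finite) config measure"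
  assumes sp: "\<And>k. shift_prob (\<mu> k)"
    and conv: "\<And>J w. finite J \<Longrightarrow> convergent (\<lambda>k. measure (\<mu> k) (cylinder J w))"
  shows "cylinder_weights (\<lambda>J w. lim (\<lambda>k. measure (\<mu> k) (cylinder J w)))"
proof
  let ?q = "\<lambda>J w. lim (\<lambda>k. measure (\<mu> k) (cylinder J w))"
  have qlim: "(\<lambda>k. measure (\<mu> k) (cylinder J w)) \<longlonglongrightarrow> ?q J w" if "finite J" for J w
    using conv[OF that] by (simp add: convergent_LIMSEQ_iff)
  show "0 \<le> ?q J w" if "finite J" for J w
    by (rule LIMSEQ_le_const[OF qlim[OF that]]) simp
  show "?q J w = (\<Sum>v\<in>{v\<in>words H. restrict v J = w}. ?q H v)"
    if JH: "J \<subseteq> H" "finite H" "w \<in> words J" for J H w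
  proof -
    have "(\<lambda>k. \<Sum>v\<in>{v\<in>words H. restrict v J = w}. measure (\<mu> k) (cylinder H v)) \<longlonglongrightarrow>
        (\<Sum>v\<in>{v\<in>words H. restrict v J = w}. ?q H v)"
      by (intro tendsto_sum qlim JH)
    then have "(\<lambda>k. measure (\<mu> k) (cylinder J w)) \<longlonglongrightarrow> (\<Sum>v\<in>{v\<in>words H. restrict v J = w}. ?q H v)"
      by (simp only: measure_cylinder_eq_sum_refine[OF sp JH])
    moreover have "finite J" using JH finite_subset by auto
    ultimately show ?thesis using qlim LIMSEQ_unique by blast
  qed
  show "(\<Sum>v\<in>words H. ?q H v) = 1" if "finite H" for H
  proof -
    have "(\<lambda>k. \<Sum>v\<in>words H. measure (\<mu> k) (cylinder H v)) \<longlonglongrightarrow> (\<Sum>v\<in>words H. ?q H v)"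
      using that by (intro tendsto_sum qlim)
    then have "(\<lambda>k. 1::real) \<longlonglongrightarrow> (\<Sum>v\<in>words H. ?q H v)"
      by (simp only: sum_measure_cylinders[OF sp that])
    then show ?thesis using LIMSEQ_unique tendsto_const by blast
  qed
qed

lemma cylinders_converge_if_convergent:
  fixes \<mu> :: "nat \<Rightarrow> ('d, 'a::finite) config measure"
  assumes sp: "\<And>k. shift_prob (\<mu> k)"
    and conv: "\<And>J w. finite J \<Longrightarrow> convergent (\<lambda>k. measure (\<mu> k) (cylinder J w))"
  obtains \<nu> where "shift_prob \<nu>" "cylinders_converge \<mu> \<nu>"
proof -
  interpret cylinder_weights "\<lambda>J w. lim (\<lambda>k. measure (\<mu> k) (cylinder J w))"
    by (rule cylinder_weights_lim[OF sp conv])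
  obtain \<nu> where \<nu>: "shift_prob \<nu>"
    "\<And>J w. finite J \<Longrightarrow> measure \<nu> (cylinder J w) = lim (\<lambda>k. measure (\<mu> k) (cylinder J (restrict w J)))"
    using exists_shift_prob by blast
  have "(\<lambda>k. measure (\<mu> k) (cylinder J w)) \<longlonglongrightarrow> measure \<nu> (cylinder J w)" if "finite J" for J w
    using conv[OF that, of w] \<nu>(2)[OF that, of w] by (simp add: cylinder_restrict convergent_LIMSEQ_iff)
  then have "cylinders_converge \<mu> \<nu>"
    unfolding cylinders_converge_def by blast
  with \<nu>(1) show ?thesis by (rule that)
qed

lemma cylinders_converge_invariant:
  fixes \<mu> :: "nat \<Rightarrow> ('d, 'a::finite) config measure"
  assumes inv: "\<And>k. \<mu> k \<in> invariant_measures" and sp: "shift_prob \<nu>"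
    and lim: "cylinders_converge \<mu> \<nu>"
  shows "\<nu> \<in> invariant_measures"
proof -
  have "distr \<nu> shift_space (shift_map v) = \<nu>" for v
  proof (rule shift_prob_eqI)
    have sets: "sets \<nu> = sets shift_space" using sp by (simp add: shift_prob_def)
    have mv: "shift_map v \<in> measurable \<nu> shift_space"
      using measurable_shift_map unfolding measurable_cong_sets[OF sets refl] .
    show "shift_prob (distr \<nu> shift_space (shift_map v))"
      using sp prob_space.prob_space_distr[OF _ mv] by (simp add: shift_prob_def)
    fix J :: "('d \<Rightarrow> int) set" and w assume J: "finite J"
    have "(\<lambda>k. measure (\<mu> k) (cylinder (translate_sites v J) (translate_word v w))) \<longlonglongrightarrow>
        measure \<nu> (cylinder (translate_sites v J) (translate_word v w))"
      using lim J unfolding cylinders_converge_def by simp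
    then have "(\<lambda>k. measure (\<mu> k) (cylinder J w)) \<longlonglongrightarrow>
        measure \<nu> (cylinder (translate_sites v J) (translate_word v w))"
      by (simp only: measure_translate_cylinder[OF inv J])
    moreover have "(\<lambda>k. measure (\<mu> k) (cylinder J w)) \<longlonglongrightarrow> measure \<nu> (cylinder J w)"
      using lim J unfolding cylinders_converge_def by simp
    ultimately have "measure \<nu> (cylinder (translate_sites v J) (translate_word v w)) =
        measure \<nu> (cylinder J w)"
      by (rule LIMSEQ_unique)
    then show "measure (distr \<nu> shift_space (shift_map v)) (cylinder J w) = measure \<nu> (cylinder J w)"
      using J by (simp add: measure_distr[OF mv] shift_prob_space[OF sp] vimage_shift_map_cylinder)
  qed (rule sp)
  then show ?thesis
    using sp by (simp add: invariant_measures_def shift_prob_def)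
qed

lemma invariant_measures_seq_compact:
  fixes \<mu> :: "nat \<Rightarrow> ('d::finite, 'a::finite) config measure"
  assumes inv: "\<And>k. \<mu> k \<in> invariant_measures"
  obtains r \<nu> where "strict_mono r" "\<nu> \<in> invariant_measures" "cylinders_converge (\<mu> \<circ> r) \<nu>"
proof -
  have sp: "shift_prob (\<mu> k)" for k using inv by (rule invariant_measures_shift_prob)
  obtain r where r: "strict_mono r"
    "\<And>J w. finite J \<Longrightarrow> convergent (\<lambda>k. measure (\<mu> (r k)) (cylinder J w))"
    using convergent_subseq_cylinder_measures[of \<mu>] sp by blast
  have "shift_prob ((\<mu> \<circ> r) k)" for k
    using sp by simp
  moreover have "convergent (\<lambda>k. measure ((\<mu> \<circ> r) k) (cylinder J w))" if "finite J" for J w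
    using r(2)[OF that] by simp
  ultimately obtain \<nu> where \<nu>: "shift_prob \<nu>" "cylinders_converge (\<mu> \<circ> r) \<nu>"
    by (rule cylinders_converge_if_convergent)
  have "\<nu> \<in> invariant_measures"
    using inv by (intro cylinders_converge_invariant[OF _ \<nu>]) simp
  then show ?thesis
    using r(1) \<nu>(2) that by blast
qed

section \<open>Existence of equilibrium states\<close>

lemma eta_eq: "eta t = - (t * ln t)"
  by (simp add: eta_def)

lemma continuous_on_eta: "continuous_on {0..} eta"
  unfolding continuous_on_def
proof
  fix x :: real assume x: "x \<in> {0..}"
  show "(eta \<longlongrightarrow> eta x) (at x within {0..})"
  proof (cases "x = 0")
    case True
    have "((\<lambda>t::real. - (t * ln t)) \<longlongrightarrow> 0) (at_right 0)"
      by real_asymp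
    then show ?thesis
      using True by (simp add: at_within_Ici_at_right eta_eq[abs_def])
  next
    case False
    then have "isCont eta x"
      using x unfolding eta_eq[abs_def] by (intro continuous_intros) auto
    then show ?thesis
      unfolding isCont_def by (rule tendsto_within_subset) simp
  qed
qed

lemma tendsto_block_entropy_density:
  fixes \<mu> :: "nat \<Rightarrow> ('d::finite, 'a::finite) config measure"
  assumes "cylinders_converge \<mu> \<nu>"
  shows "(\<lambda>k. block_entropy_density (\<mu> k) m) \<longlonglongrightarrow> block_entropy_density \<nu> m"
proof -
  have "(\<lambda>k. eta (measure (\<mu> k) (cylinder J w))) \<longlonglongrightarrow> eta (measure \<nu> (cylinder J w))"
    if "finite J" for J w
    using assms that unfolding cylinders_converge_def
    by (intro continuous_on_tendsto_compose[OF continuous_on_eta]) auto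
  then show ?thesis
    unfolding block_entropy_density_def block_entropy_eq_window_entropy window_entropy_def
      divide_inverse
    by (intro tendsto_mult_right tendsto_sum) auto
qed

lemma tendsto_integral_cylinders_converge:
  fixes \<mu> :: "nat \<Rightarrow> ('d::finite, 'a::finite) config measure"
  assumes cont: "continuous_map shift_topology euclideanreal \<phi>"
    and sp: "\<And>k. shift_prob (\<mu> k)" "shift_prob \<nu>" and lim: "cylinders_converge \<mu> \<nu>"
  shows "(\<lambda>k. integral\<^sup>L (\<mu> k) \<phi>) \<longlonglongrightarrow> integral\<^sup>L \<nu> \<phi>"
proof (rule LIMSEQ_I)
  fix e :: real assume e: "0 < e"
  then obtain \<Lambda> where L: "finite \<Lambda>" "\<And>x y. (\<forall>i\<in>\<Lambda>. x i = y i) \<Longrightarrow> \<bar>\<phi> x - \<phi> y\<bar> < e / 3"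
    using continuous_map_uniformly_local[OF cont, of "e / 3"] by auto
  define S where "S \<mu>' = (\<Sum>w\<in>words \<Lambda>. \<phi> w * measure \<mu>' (cylinder \<Lambda> w))"
    for \<mu>' :: "('d, 'a) config measure"
  have "(\<lambda>k. S (\<mu> k)) \<longlonglongrightarrow> S \<nu>"
    using lim L(1) unfolding S_def cylinders_converge_def by (intro tendsto_intros) auto
  then obtain N where N: "\<And>k. N \<le> k \<Longrightarrow> \<bar>S (\<mu> k) - S \<nu>\<bar> < e / 3"
    using LIMSEQ_D[of _ "S \<nu>" "e / 3"] e by auto
  have "\<bar>integral\<^sup>L (\<mu> k) \<phi> - integral\<^sup>L \<nu> \<phi>\<bar> < e" if "N \<le> k" for k
  proof -
    have "\<bar>integral\<^sup>L (\<mu> k) \<phi> - S (\<mu> k)\<bar> \<le> e / 3" "\<bar>integral\<^sup>L \<nu> \<phi> - S \<nu>\<bar> \<le> e / 3"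
      unfolding S_def
      using integral_continuous_map_approx[OF cont sp(1) L]
        integral_continuous_map_approx[OF cont sp(2) L]
      by auto
    then show ?thesis using N[OF that] by linarith
  qed
  then show "\<exists>N. \<forall>k\<ge>N. norm (integral\<^sup>L (\<mu> k) \<phi> - integral\<^sup>L \<nu> \<phi>) < e" by auto
qed

text \<open>The entropy is an infimum of the continuous block entropy densities.\<close>

lemma ms_entropy_upper_semicontinuous:
  fixes \<mu> :: "nat \<Rightarrow> ('d::finite, 'a::finite) config measure"
  assumes inv: "\<And>k. \<mu> k \<in> invariant_measures" "\<nu> \<in> invariant_measures"
    and lim: "cylinders_converge \<mu> \<nu>"
    and c: "c \<longlonglongrightarrow> L" "\<And>k. c k \<le> ms_entropy (\<mu> k)"
  shows "L \<le> ms_entropy \<nu>"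
proof (rule ms_entropy_greatest[OF inv(2)])
  fix m :: nat assume "1 \<le> m"
  then have "c k \<le> block_entropy_density (\<mu> k) m" for k
    using c(2) ms_entropy_le_block_entropy_density[OF inv(1)] order_trans by blast
  then show "L \<le> block_entropy_density \<nu> m"
    by (intro LIMSEQ_le[OF c(1) tendsto_block_entropy_density[OF lim]]) auto
qed

lemma invariant_measures_nonempty: "(invariant_measures :: ('d, 'a) config measure set) \<noteq> {}"
proof -
  let ?c = "(\<lambda>_. undefined) :: ('d, 'a) config"
  have "distr (return shift_space ?c) shift_space (shift_map v) = return shift_space ?c" for v
    by (subst distr_return) (simp_all add: shift_map_def)
  then have "return shift_space ?c \<in> invariant_measures"
    unfolding invariant_measures_def by (auto intro: prob_space_return)
  then show ?thesis by blast
qed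

lemma bdd_above_pressure:
  fixes \<phi> :: "('d::finite, 'a::finite) config \<Rightarrow> real"
  assumes cont: "continuous_map shift_topology euclideanreal \<phi>"
  shows "bdd_above ((\<lambda>\<nu>. ms_entropy \<nu> + \<beta> * integral\<^sup>L \<nu> \<phi>) ` invariant_measures)"
proof -
  obtain B where B: "\<And>x. \<bar>\<phi> x\<bar> \<le> B" using continuous_map_bounded[OF cont] by blast
  have "ms_entropy \<nu> + \<beta> * integral\<^sup>L \<nu> \<phi> \<le> ln (real CARD('a)) + \<bar>\<beta>\<bar> * B"
    if inv: "\<nu> \<in> invariant_measures" for \<nu>
  proof -
    have "\<beta> * integral\<^sup>L \<nu> \<phi> \<le> \<bar>\<beta>\<bar> * \<bar>integral\<^sup>L \<nu> \<phi>\<bar>" by (simp add: abs_mult[symmetric])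
    also have "\<dots> \<le> \<bar>\<beta>\<bar> * B"
      using abs_integral_continuous_map_le[OF cont invariant_measures_shift_prob[OF inv] B]
      by (intro mult_left_mono) auto
    finally show ?thesis using ms_entropy_le_ln_card[OF inv] by simp
  qed
  then show ?thesis by (intro bdd_aboveI2)
qed

lemma pressure_upper:
  fixes \<phi> :: "('d::finite, 'a::finite) config \<Rightarrow> real"
  assumes "continuous_map shift_topology euclideanreal \<phi>" "\<nu> \<in> invariant_measures"
  shows "ms_entropy \<nu> + \<beta> * integral\<^sup>L \<nu> \<phi> \<le> pressure \<phi> \<beta>"
  unfolding pressure_def by (rule cSUP_upper[OF assms(2) bdd_above_pressure[OF assms(1)]])

lemma pressure_least:
  fixes \<phi> :: "('d::finite, 'a::finite) config \<Rightarrow> real"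
  assumes "\<And>\<nu>. \<nu> \<in> invariant_measures \<Longrightarrow> ms_entropy \<nu> + \<beta> * integral\<^sup>L \<nu> \<phi> \<le> X"
  shows "pressure \<phi> \<beta> \<le> X"
  unfolding pressure_def using assms by (intro cSUP_least[OF invariant_measures_nonempty])

lemma convex_on_pressure:
  fixes \<phi> :: "('d::finite, 'a::finite) config \<Rightarrow> real"
  assumes cont: "continuous_map shift_topology euclideanreal \<phi>"
  shows "convex_on UNIV (pressure \<phi>)"
proof (rule convex_onI)
  fix t x y :: real assume t: "0 < t" "t < 1"
  show "pressure \<phi> ((1 - t) *\<^sub>R x + t *\<^sub>R y) \<le> (1 - t) * pressure \<phi> x + t * pressure \<phi> y"
  proof (rule pressure_least)
    fix \<nu> :: "('d, 'a) config measure" assume inv: "\<nu> \<in> invariant_measures"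
    have "ms_entropy \<nu> + ((1 - t) *\<^sub>R x + t *\<^sub>R y) * integral\<^sup>L \<nu> \<phi> =
        (1 - t) * (ms_entropy \<nu> + x * integral\<^sup>L \<nu> \<phi>) + t * (ms_entropy \<nu> + y * integral\<^sup>L \<nu> \<phi>)"
      by (simp add: algebra_simps)
    also have "\<dots> \<le> (1 - t) * pressure \<phi> x + t * pressure \<phi> y"
      using t pressure_upper[OF cont inv]
      by (intro add_mono mult_left_mono) auto
    finally show "ms_entropy \<nu> + ((1 - t) *\<^sub>R x + t *\<^sub>R y) * integral\<^sup>L \<nu> \<phi> \<le>
        (1 - t) * pressure \<phi> x + t * pressure \<phi> y" .
  qed
qed simp

lemma continuous_on_pressure:
  fixes \<phi> :: "('d::finite, 'a::finite) config \<Rightarrow> real"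
  assumes "continuous_map shift_topology euclideanreal \<phi>"
  shows "continuous_on UNIV (pressure \<phi>)"
  using convex_on_pressure[OF assms] by (rule convex_on_continuous[OF open_UNIV])

text \<open>An equilibrium state is a limit point of a maximising sequence; the upper semicontinuity
  of the entropy and the continuity of the integral show that the limit still maximises.\<close>

lemma equilibrium_states_nonempty:
  fixes \<phi> :: "('d::finite, 'a::finite) config \<Rightarrow> real"
  assumes cont: "continuous_map shift_topology euclideanreal \<phi>"
  shows "equilibrium_states \<phi> \<beta> \<noteq> {}"
proof -
  let ?P = "pressure \<phi> \<beta>"
  have "\<exists>\<mu>. \<mu> \<in> invariant_measures \<and> ?P - 1 / Suc k < ms_entropy \<mu> + \<beta> * integral\<^sup>L \<mu> \<phi>" for k
  proof -
    have "?P - 1 / Suc k < ?P" by simp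
    then show ?thesis
      unfolding pressure_def
      using less_cSUP_iff[OF invariant_measures_nonempty bdd_above_pressure[OF cont]] by blast
  qed
  then obtain \<mu> where inv: "\<And>k. \<mu> k \<in> invariant_measures"
    and max: "\<And>k. ?P - 1 / Suc k < ms_entropy (\<mu> k) + \<beta> * integral\<^sup>L (\<mu> k) \<phi>"
    by metis
  obtain r \<nu> where r: "strict_mono r" and \<nu>: "\<nu> \<in> invariant_measures"
    and lim: "cylinders_converge (\<mu> \<circ> r) \<nu>"
    by (rule invariant_measures_seq_compact[OF inv])
  have inv_r: "(\<mu> \<circ> r) k \<in> invariant_measures" for k
    using inv by simp
  have int: "(\<lambda>k. integral\<^sup>L ((\<mu> \<circ> r) k) \<phi>) \<longlonglongrightarrow> integral\<^sup>L \<nu> \<phi>"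
    using inv_r \<nu>
    by (intro tendsto_integral_cylinders_converge[OF cont _ _ lim] invariant_measures_shift_prob)
  have "(\<lambda>k. 1 / real (Suc (r k))) \<longlonglongrightarrow> 0"
    using LIMSEQ_subseq_LIMSEQ[OF LIMSEQ_Suc[OF lim_inverse_n'] r] by (simp add: o_def)
  then have "(\<lambda>k. ?P - 1 / Suc (r k) - \<beta> * integral\<^sup>L ((\<mu> \<circ> r) k) \<phi>) \<longlonglongrightarrow>
      ?P - 0 - \<beta> * integral\<^sup>L \<nu> \<phi>"
    by (intro tendsto_diff tendsto_mult tendsto_const int)
  moreover have "?P - 1 / Suc (r k) - \<beta> * integral\<^sup>L ((\<mu> \<circ> r) k) \<phi> \<le> ms_entropy ((\<mu> \<circ> r) k)" for k
    using max[of "r k"] by simp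
  ultimately have "?P - 0 - \<beta> * integral\<^sup>L \<nu> \<phi> \<le> ms_entropy \<nu>"
    by (rule ms_entropy_upper_semicontinuous[OF inv_r \<nu> lim])
  moreover have "ms_entropy \<nu> + \<beta> * integral\<^sup>L \<nu> \<phi> \<le> ?P"
    by (rule pressure_upper[OF cont \<nu>])
  ultimately have "\<nu> \<in> equilibrium_states \<phi> \<beta>"
    using \<nu> by (simp add: equilibrium_states_def)
  then show ?thesis by blast
qed

section \<open>Affine pieces of the pressure and freezing\<close>

lemma affine_le_touching_eq:
  fixes a b c s \<beta> \<delta> :: real
  assumes "0 < \<delta>" and le: "\<And>x. \<beta> - \<delta> \<le> x \<Longrightarrow> x \<le> \<beta> + \<delta> \<Longrightarrow> c + x * s \<le> a * x + b"
    and eq: "c + \<beta> * s = a * \<beta> + b"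
  shows "s = a" "c = b"
proof -
  have "c + (\<beta> + \<delta>) * s \<le> a * (\<beta> + \<delta>) + b" "c + (\<beta> - \<delta>) * s \<le> a * (\<beta> - \<delta>) + b"
    using le \<open>0 < \<delta>\<close> by auto
  then have "\<delta> * s \<le> \<delta> * a" "\<delta> * a \<le> \<delta> * s"
    using eq by (simp_all add: algebra_simps)
  then show "s = a" using \<open>0 < \<delta>\<close> by simp
  then show "c = b" using eq by simp
qed

text \<open>An equilibrium state at \<open>\<beta>\<close> is a supporting line of the pressure at \<open>\<beta>\<close>.\<close>

lemma equilibrium_states_eq_if_affine:
  fixes \<phi> :: "('d::finite, 'a::finite) config \<Rightarrow> real"
  assumes cont: "continuous_map shift_topology euclideanreal \<phi>" and "0 < \<delta>"
    and aff: "\<And>x. \<beta> - \<delta> \<le> x \<Longrightarrow> x \<le> \<beta> + \<delta> \<Longrightarrow> pressure \<phi> x = a * x + b"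
  shows "equilibrium_states \<phi> \<beta> = {\<mu>\<in>invariant_measures. integral\<^sup>L \<mu> \<phi> = a \<and> ms_entropy \<mu> = b}"
proof (intro equalityI subsetI)
  fix \<mu> assume "\<mu> \<in> equilibrium_states \<phi> \<beta>"
  then have inv: "\<mu> \<in> invariant_measures"
    and eq: "ms_entropy \<mu> + \<beta> * integral\<^sup>L \<mu> \<phi> = a * \<beta> + b"
    using aff[of \<beta>] \<open>0 < \<delta>\<close> by (auto simp: equilibrium_states_def)
  have "ms_entropy \<mu> + x * integral\<^sup>L \<mu> \<phi> \<le> a * x + b" if "\<beta> - \<delta> \<le> x" "x \<le> \<beta> + \<delta>" for x
    using pressure_upper[OF cont inv, of x] aff[OF that] by simp
  then show "\<mu> \<in> {\<mu>\<in>invariant_measures. integral\<^sup>L \<mu> \<phi> = a \<and> ms_entropy \<mu> = b}"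
    using affine_le_touching_eq[OF \<open>0 < \<delta>\<close> _ eq] inv by blast
next
  fix \<mu> assume "\<mu> \<in> {\<mu>\<in>invariant_measures. integral\<^sup>L \<mu> \<phi> = a \<and> ms_entropy \<mu> = b}"
  then show "\<mu> \<in> equilibrium_states \<phi> \<beta>"
    using aff[of \<beta>] \<open>0 < \<delta>\<close> by (auto simp: equilibrium_states_def algebra_simps)
qed

lemma pressure_eq_between_equilibrium_states:
  fixes \<phi> :: "('d::finite, 'a::finite) config \<Rightarrow> real"
  assumes cont: "continuous_map shift_topology euclideanreal \<phi>"
    and \<mu>: "\<mu> \<in> equilibrium_states \<phi> \<beta>" "\<mu> \<in> equilibrium_states \<phi> \<beta>'"
    and x: "\<beta> \<le> x" "x \<le> \<beta>'"
  shows "pressure \<phi> x = ms_entropy \<mu> + x * integral\<^sup>L \<mu> \<phi>"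
proof (rule antisym)
  have inv: "\<mu> \<in> invariant_measures" using \<mu> by (simp add: equilibrium_states_def)
  show "ms_entropy \<mu> + x * integral\<^sup>L \<mu> \<phi> \<le> pressure \<phi> x"
    by (rule pressure_upper[OF cont inv])
  show "pressure \<phi> x \<le> ms_entropy \<mu> + x * integral\<^sup>L \<mu> \<phi>"
  proof (cases "\<beta> = \<beta>'")
    case True
    then show ?thesis using \<mu>(1) x by (simp add: equilibrium_states_def)
  next
    case False
    define t where "t = (x - \<beta>) / (\<beta>' - \<beta>)"
    have "\<beta> < \<beta>'" using x False by simp
    then have "t * (\<beta>' - \<beta>) = x - \<beta>" "0 \<le> t" "t \<le> 1"
      using x by (simp_all add: t_def divide_le_eq)
    then have t: "0 \<le> t" "t \<le> 1" "x = (1 - t) *\<^sub>R \<beta> + t *\<^sub>R \<beta>'"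
      by (simp_all add: algebra_simps)
    have "pressure \<phi> x \<le> (1 - t) * pressure \<phi> \<beta> + t * pressure \<phi> \<beta>'"
      unfolding t(3) using convex_on_pressure[OF cont] t(1,2) by (intro convex_onD) auto
    also have "\<dots> = ms_entropy \<mu> + ((1 - t) * \<beta> + t * \<beta>') * integral\<^sup>L \<mu> \<phi>"
    proof -
      have "pressure \<phi> \<beta> = ms_entropy \<mu> + \<beta> * integral\<^sup>L \<mu> \<phi>"
        "pressure \<phi> \<beta>' = ms_entropy \<mu> + \<beta>' * integral\<^sup>L \<mu> \<phi>"
        using \<mu> by (simp_all add: equilibrium_states_def)
      then show ?thesis by (simp add: algebra_simps)
    qed
    also have "\<dots> = ms_entropy \<mu> + x * integral\<^sup>L \<mu> \<phi>"
      using t(3) by simp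
    finally show ?thesis .
  qed
qed

lemma integral_le_slope_if_affine:
  fixes \<phi> :: "('d::finite, 'a::finite) config \<Rightarrow> real"
  assumes cont: "continuous_map shift_topology euclideanreal \<phi>"
    and aff: "\<And>x. \<beta>c \<le> x \<Longrightarrow> pressure \<phi> x = a * x + b" and inv: "\<nu> \<in> invariant_measures"
  shows "integral\<^sup>L \<nu> \<phi> \<le> a"
proof (rule ccontr)
  assume "\<not> integral\<^sup>L \<nu> \<phi> \<le> a"
  then have pos: "0 < integral\<^sup>L \<nu> \<phi> - a" by simp
  define x where "x = max \<beta>c ((\<bar>b\<bar> + 1) / (integral\<^sup>L \<nu> \<phi> - a))"
  have "(\<bar>b\<bar> + 1) / (integral\<^sup>L \<nu> \<phi> - a) \<le> x"
    by (simp add: x_def)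
  then have "\<bar>b\<bar> + 1 \<le> x * (integral\<^sup>L \<nu> \<phi> - a)"
    using pos by (simp add: divide_le_eq)
  moreover have "ms_entropy \<nu> + x * integral\<^sup>L \<nu> \<phi> \<le> a * x + b"
    using pressure_upper[OF cont inv, of x] aff[of x] by (simp add: x_def)
  moreover have "0 \<le> ms_entropy \<nu>" by (rule ms_entropy_nonneg[OF inv])
  ultimately show False by (simp add: algebra_simps)
qed

lemma exists_invariant_measure_if_affine:
  fixes \<phi> :: "('d::finite, 'a::finite) config \<Rightarrow> real"
  assumes cont: "continuous_map shift_topology euclideanreal \<phi>"
    and aff: "\<And>x. \<beta>c \<le> x \<Longrightarrow> pressure \<phi> x = a * x + b"
  obtains \<mu> where "\<mu> \<in> invariant_measures" "integral\<^sup>L \<mu> \<phi> = a" "ms_entropy \<mu> = b"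
proof -
  have "equilibrium_states \<phi> (\<beta>c + 1) =
      {\<mu>\<in>invariant_measures. integral\<^sup>L \<mu> \<phi> = a \<and> ms_entropy \<mu> = b}"
    by (rule equilibrium_states_eq_if_affine[OF cont zero_less_one]) (rule aff, simp)
  then show ?thesis
    using equilibrium_states_nonempty[OF cont, of "\<beta>c + 1"] that by auto
qed

lemma s_phi_eq_if_affine:
  fixes \<phi> :: "('d::finite, 'a::finite) config \<Rightarrow> real"
  assumes cont: "continuous_map shift_topology euclideanreal \<phi>"
    and aff: "\<And>x. \<beta>c \<le> x \<Longrightarrow> pressure \<phi> x = a * x + b"
  shows "s_phi \<phi> = a"
  unfolding s_phi_def
proof (rule antisym)
  have upper: "integral\<^sup>L \<nu> \<phi> \<le> a" if "\<nu> \<in> invariant_measures" for \<nu>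
    using integral_le_slope_if_affine[OF cont aff that] .
  then show "(SUP \<nu>\<in>invariant_measures. integral\<^sup>L \<nu> \<phi>) \<le> a"
    by (rule cSUP_least[OF invariant_measures_nonempty])
  obtain \<mu> where \<mu>: "\<mu> \<in> invariant_measures" "integral\<^sup>L \<mu> \<phi> = a"
    using exists_invariant_measure_if_affine[OF cont aff] by blast
  have "bdd_above ((\<lambda>\<nu>. integral\<^sup>L \<nu> \<phi>) ` invariant_measures)"
    using upper by (intro bdd_aboveI2)
  then have "integral\<^sup>L \<mu> \<phi> \<le> (SUP \<nu>\<in>invariant_measures. integral\<^sup>L \<nu> \<phi>)"
    by (rule cSUP_upper[OF \<mu>(1)])
  then show "a \<le> (SUP \<nu>\<in>invariant_measures. integral\<^sup>L \<nu> \<phi>)"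
    using \<mu>(2) by simp
qed

lemma h_phi_eq_if_affine:
  fixes \<phi> :: "('d::finite, 'a::finite) config \<Rightarrow> real"
  assumes cont: "continuous_map shift_topology euclideanreal \<phi>"
    and aff: "\<And>x. \<beta>c \<le> x \<Longrightarrow> pressure \<phi> x = a * x + b"
  shows "h_phi \<phi> = b"
  unfolding h_phi_def
proof (rule antisym)
  let ?M = "{\<eta>\<in>invariant_measures. integral\<^sup>L \<eta> \<phi> = s_phi \<phi>}"
  have upper: "ms_entropy \<eta> \<le> b" if \<eta>: "\<eta> \<in> ?M" for \<eta>
  proof -
    have "ms_entropy \<eta> + \<beta>c * integral\<^sup>L \<eta> \<phi> \<le> a * \<beta>c + b"
      using pressure_upper[OF cont, of \<eta> \<beta>c] aff[of \<beta>c] \<eta> by simp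
    then show ?thesis
      using \<eta> s_phi_eq_if_affine[OF cont aff] by (simp add: algebra_simps)
  qed
  obtain \<mu> where \<mu>: "\<mu> \<in> invariant_measures" "integral\<^sup>L \<mu> \<phi> = a" "ms_entropy \<mu> = b"
    using exists_invariant_measure_if_affine[OF cont aff] by blast
  then have mem: "\<mu> \<in> ?M"
    using s_phi_eq_if_affine[OF cont aff] by simp
  show "(SUP \<eta>\<in>?M. ms_entropy \<eta>) \<le> b"
    by (rule cSUP_least) (use mem upper in auto)
  have "bdd_above (ms_entropy ` ?M)"
    using upper by (intro bdd_aboveI2)
  then have "ms_entropy \<mu> \<le> (SUP \<eta>\<in>?M. ms_entropy \<eta>)"
    by (rule cSUP_upper[OF mem])
  then show "b \<le> (SUP \<eta>\<in>?M. ms_entropy \<eta>)"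
    using \<mu>(3) by simp
qed

lemma freezing_imp_affine_pressure:
  fixes \<phi> :: "('d::finite, 'a::finite) config \<Rightarrow> real"
  assumes cont: "continuous_map shift_topology euclideanreal \<phi>"
    and fr: "freezing_phase_transition \<phi> \<beta>c"
  obtains a b where "\<And>x. \<beta>c \<le> x \<Longrightarrow> pressure \<phi> x = a * x + b"
proof -
  obtain \<mu> where \<mu>: "\<mu> \<in> equilibrium_states \<phi> (\<beta>c + 1)"
    using equilibrium_states_nonempty[OF cont] by blast
  define a b where "a = integral\<^sup>L \<mu> \<phi>" and "b = ms_entropy \<mu>"
  have gt: "pressure \<phi> x = a * x + b" if "\<beta>c < x" for x
  proof -
    have "equilibrium_states \<phi> (\<beta>c + 1) = equilibrium_states \<phi> x"
      using conjunct1[OF fr[unfolded freezing_phase_transition_def], rule_format, of "\<beta>c + 1" x] that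
      by simp
    then have "\<mu> \<in> equilibrium_states \<phi> x" using \<mu> by simp
    then show ?thesis by (simp add: equilibrium_states_def a_def b_def algebra_simps)
  qed
  have "isCont (pressure \<phi>) \<beta>c"
    using continuous_on_pressure[OF cont] by (simp add: continuous_on_eq_continuous_at)
  then have "(pressure \<phi> \<longlongrightarrow> pressure \<phi> \<beta>c) (at_right \<beta>c)"
    unfolding isCont_def by (rule tendsto_within_subset) simp
  moreover have "\<forall>\<^sub>F x in at_right \<beta>c. pressure \<phi> x = a * x + b"
    using eventually_at_right_less[of \<beta>c] by (rule eventually_mono) (rule gt)
  ultimately have "((\<lambda>x. a * x + b) \<longlongrightarrow> pressure \<phi> \<beta>c) (at_right \<beta>c)"
    by (rule Lim_transform_eventually)
  moreover have "((\<lambda>x. a * x + b) \<longlongrightarrow> a * \<beta>c + b) (at_right \<beta>c)"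
    by (intro tendsto_intros)
  ultimately have "pressure \<phi> \<beta>c = a * \<beta>c + b"
    by (rule tendsto_unique[OF trivial_limit_at_right_real])
  then have "pressure \<phi> x = a * x + b" if "\<beta>c \<le> x" for x
    using gt that by (cases "x = \<beta>c") auto
  then show ?thesis by (rule that)
qed

lemma freezing_imp_not_affine_beyond:
  fixes \<phi> :: "('d::finite, 'a::finite) config \<Rightarrow> real"
  assumes cont: "continuous_map shift_topology euclideanreal \<phi>"
    and fr: "freezing_phase_transition \<phi> \<beta>c"
    and I: "is_interval I" "{\<beta>c..} \<subset> I"
  shows "\<not> affine_on (pressure \<phi>) I"
proof
  assume "affine_on (pressure \<phi>) I"
  then obtain a b where ab: "\<And>x. x \<in> I \<Longrightarrow> pressure \<phi> x = a * x + b"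
    unfolding affine_on_def by blast
  obtain \<beta>0 where "\<beta>0 \<in> I - {\<beta>c..}"
    using psubset_imp_ex_mem[OF I(2)] by blast
  then have \<beta>0: "\<beta>0 \<in> I" "\<beta>0 < \<beta>c" by auto
  have "x \<in> I" if "\<beta>0 \<le> x" for x
  proof (cases "\<beta>c \<le> x")
    case False
    moreover have "\<beta>c \<in> I" using I(2) by auto
    ultimately show ?thesis
      using I(1) \<beta>0(1) that unfolding is_interval_1 by (meson less_imp_le not_le)
  qed (use I(2) in auto)
  then have aff: "pressure \<phi> x = a * x + b" if "\<beta>0 \<le> x" for x
    using ab that by blast
  define \<beta>1 where "\<beta>1 = (\<beta>0 + \<beta>c) / 2"
  have "\<beta>1 - (\<beta>c - \<beta>0) / 2 = \<beta>0" by (simp add: \<beta>1_def field_simps)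
  then have "equilibrium_states \<phi> \<beta>1 = {\<mu>\<in>invariant_measures. integral\<^sup>L \<mu> \<phi> = a \<and> ms_entropy \<mu> = b}"
    using \<beta>0 by (intro equilibrium_states_eq_if_affine[OF cont, of "(\<beta>c - \<beta>0) / 2"] aff) auto
  moreover have "equilibrium_states \<phi> (\<beta>c + 1) =
      {\<mu>\<in>invariant_measures. integral\<^sup>L \<mu> \<phi> = a \<and> ms_entropy \<mu> = b}"
    using \<beta>0 by (intro equilibrium_states_eq_if_affine[OF cont zero_less_one] aff) auto
  moreover have "\<beta>1 < \<beta>c" using \<beta>0 by (simp add: \<beta>1_def)
  then have "equilibrium_states \<phi> \<beta>1 \<noteq> equilibrium_states \<phi> (\<beta>c + 1)"
    using conjunct2[OF fr[unfolded freezing_phase_transition_def], rule_format, of \<beta>1 "\<beta>c + 1"]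
    by simp
  ultimately show False by simp
qed

lemma affine_pressure_imp_freezing:
  fixes \<phi> :: "('d::finite, 'a::finite) config \<Rightarrow> real"
  assumes cont: "continuous_map shift_topology euclideanreal \<phi>"
    and aff: "\<And>x. \<beta>c \<le> x \<Longrightarrow> pressure \<phi> x = a * x + b"
    and maximal: "\<And>I. is_interval I \<Longrightarrow> {\<beta>c..} \<subset> I \<Longrightarrow> \<not> affine_on (pressure \<phi>) I"
  shows "freezing_phase_transition \<phi> \<beta>c"
proof -
  have ES: "equilibrium_states \<phi> \<beta> = {\<mu>\<in>invariant_measures. integral\<^sup>L \<mu> \<phi> = a \<and> ms_entropy \<mu> = b}"
    if "\<beta>c < \<beta>" for \<beta>
    using that aff by (intro equilibrium_states_eq_if_affine[OF cont, of "\<beta> - \<beta>c"]) auto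
  have "equilibrium_states \<phi> \<beta> \<noteq> equilibrium_states \<phi> \<beta>'" if "\<beta> < \<beta>c" "\<beta>c < \<beta>'" for \<beta> \<beta>'
  proof
    assume eq: "equilibrium_states \<phi> \<beta> = equilibrium_states \<phi> \<beta>'"
    obtain \<mu> where \<mu>: "\<mu> \<in> equilibrium_states \<phi> \<beta>'"
      using equilibrium_states_nonempty[OF cont] by blast
    then have "integral\<^sup>L \<mu> \<phi> = a" "ms_entropy \<mu> = b"
      using ES[OF that(2)] by auto
    then have "pressure \<phi> x = a * x + b" if "\<beta> \<le> x" for x
      using pressure_eq_between_equilibrium_states[OF cont \<mu>[folded eq] \<mu>, of x] aff[of x] that
        \<open>\<beta>c < \<beta>'\<close> by (cases "x \<le> \<beta>'") (auto simp: algebra_simps)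
    then have "affine_on (pressure \<phi>) {\<beta>..}"
      unfolding affine_on_def by auto
    moreover have "{\<beta>c..} \<subset> {\<beta>..}" using that by auto
    ultimately show False using maximal[OF is_interval_ci] by blast
  qed
  then show ?thesis
    unfolding freezing_phase_transition_def using ES by auto
qed

theorem proposition2p3:
  fixes \<phi> :: "('d::finite, 'a::finite) config \<Rightarrow> real" and \<beta>c :: real
  assumes "continuous_map shift_topology euclideanreal \<phi>"
  shows "(freezing_phase_transition \<phi> \<beta>c \<longleftrightarrow>
           affine_on (pressure \<phi>) {\<beta>c..} \<and>
           (\<forall>I. is_interval I \<and> {\<beta>c..} \<subset> I \<longrightarrow> \<not> affine_on (pressure \<phi>) I)) \<and>
         (freezing_phase_transition \<phi> \<beta>c \<longrightarrow>
           (\<forall>\<beta>\<ge>\<beta>c. pressure \<phi> \<beta> = s_phi \<phi> * \<beta> + h_phi \<phi>))"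
proof (intro conjI impI allI)
  show "freezing_phase_transition \<phi> \<beta>c \<longleftrightarrow> affine_on (pressure \<phi>) {\<beta>c..} \<and>
      (\<forall>I. is_interval I \<and> {\<beta>c..} \<subset> I \<longrightarrow> \<not> affine_on (pressure \<phi>) I)"
  proof
    assume fr: "freezing_phase_transition \<phi> \<beta>c"
    obtain a b where "\<And>x. \<beta>c \<le> x \<Longrightarrow> pressure \<phi> x = a * x + b"
      using freezing_imp_affine_pressure[OF assms fr] by blast
    then show "affine_on (pressure \<phi>) {\<beta>c..} \<and>
        (\<forall>I. is_interval I \<and> {\<beta>c..} \<subset> I \<longrightarrow> \<not> affine_on (pressure \<phi>) I)"
      using freezing_imp_not_affine_beyond[OF assms fr] unfolding affine_on_def by auto
  next
    assume "affine_on (pressure \<phi>) {\<beta>c..} \<and>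
        (\<forall>I. is_interval I \<and> {\<beta>c..} \<subset> I \<longrightarrow> \<not> affine_on (pressure \<phi>) I)"
    then obtain a b where "\<And>x. \<beta>c \<le> x \<Longrightarrow> pressure \<phi> x = a * x + b"
      and "\<And>I. is_interval I \<Longrightarrow> {\<beta>c..} \<subset> I \<Longrightarrow> \<not> affine_on (pressure \<phi>) I"
      unfolding affine_on_def by auto
    then show "freezing_phase_transition \<phi> \<beta>c"
      by (rule affine_pressure_imp_freezing[OF assms])
  qed
next
  fix \<beta> assume fr: "freezing_phase_transition \<phi> \<beta>c" and "\<beta>c \<le> \<beta>"
  obtain a b where aff: "\<And>x. \<beta>c \<le> x \<Longrightarrow> pressure \<phi> x = a * x + b"
    using freezing_imp_affine_pressure[OF assms fr] by blast
  then show "pressure \<phi> \<beta> = s_phi \<phi> * \<beta> + h_phi \<phi>"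
    using \<open>\<beta>c \<le> \<beta>\<close> s_phi_eq_if_affine[OF assms aff] h_phi_eq_if_affine[OF assms aff] by simp
qed

end
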